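(* Consider the iterates $\Theta_k=(\Omega_k,U_k,Q_k,W_k,\varepsilon^{(1)}_k,\varepsilon^{(2)}_k,Z^{(1)}_k,Z^{(2)}_k)$ produced by the linearized ADM iteration described in the context, with parameters $\lambda_1,\lambda_2,\rho_1,\rho_2,\delta_1,\delta_2,\mu>0$ and step parameters $\eta_U,\eta_Q,\eta_W>0$. Suppose that $\mu\geq\sqrt 2\max\{\rho_1,\rho_2\}$. Then there exist positive values $\eta^0_U,\eta^0_Q,\eta^0_W,R$, depending only on the initialization, such that whenever $\eta_U>\eta^0_U$, $\eta_Q>\eta^0_Q$, $\eta_W>\eta^0_W$, the sequence $\{\Theta_k\}_{k=1}^\infty$ converges (in the sense $\mathrm{dist}(\Theta_k,S)\to 0$) to the following set of bounded feasible stationary points of the Lagrangian: $$S=\Big\{\Theta=(\Omega,U,Q,W,\varepsilon^{(1)},\varepsilon^{(2)},Z^{(1)},Z^{(2)}) \;\Big|\; \|\Theta\|<R,\ -\nabla L_s(\Theta)\in\lambda_1\partial\|U\|_1,\ H=QU+\varepsilon^{(1)},\ Y=WQU+\varepsilon^{(2)}\Big\},$$ where $\|U\|_1$ is regarded as a convex function of $\Theta$ that is constant in all components other than $U$ (so the inclusion means $-\nabla_U L_s(\Theta)\in\lambda_1\partial\|U\|_1$ and all other partial gradients of $L_s$ vanish), and $\mathrm{dist}(\Theta,S)=\inf_{\Theta'\in S}\|\Theta'-\Theta\|$.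
   Context: Data: $X\in\mathbb{R}^{m\times n}$, $H\in\mathbb{R}^{s\times n}$, $Y\in\mathbb{R}^{c\times n}$. Variables: $\Omega\in\mathbb{R}^{r\times m}$, $U\in\mathbb{R}^{r\times n}$, $Q\in\mathbb{R}^{s\times r}$, $W\in\mathbb{R}^{c\times s}$, $\varepsilon^{(1)},Z^{(1)}\in\mathbb{R}^{s\times n}$, $\varepsilon^{(2)},Z^{(2)}\in\mathbb{R}^{c\times n}$. Matrix norms $\|\cdot\|_F,\|\cdot\|_2$ are Frobenius norms, $\langle A,B\rangle=\mathrm{tr}(A^TB)$, $\|U\|_1=\sum_{ij}|U_{ij}|$. The Lagrangian is $L(\Omega,U,Q,W,\varepsilon^{(1)},\varepsilon^{(2)},Z^{(1)},Z^{(2)})=\frac12\|U-\Omega X\|_F^2+\lambda_1\|U\|_1+\frac{\rho_1}{2}\|\varepsilon^{(1)}\|^2+\frac{\rho_2}{2}\|\varepsilon^{(2)}\|^2+\langle Z^{(1)},H-QU-\varepsilon^{(1)}\rangle+\langle Z^{(2)},Y-WQU-\varepsilon^{(2)}\rangle+\frac{\mu}{2}\|H-QU-\varepsilon^{(1)}\|^2+\frac{\mu}{2}\|Y-WQU-\varepsilon^{(2)}\|^2+\frac{\delta_1}{2}\|Q\|^2+\frac{\delta_2}{2}\|W\|^2+\frac{\lambda_2}{2}\|\Omega\|^2$, and $L_s=L-\lambda_1\|U\|_1$ is its smooth part. Let $\tau_t$ denote entrywise soft thresholding, $\tau_t(x)=\mathrm{sign}(x)\max(|x|-t,0)$. Starting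 from an initialization $\Theta_0$, the iteration is, for $k=0,1,2,\dots$: $U_{k+1}=\tau_{\lambda_1/(\mu\eta_U)}\big(U_k-\frac{1}{\mu\eta_U}\nabla_U L_s(\Omega_k,U_k,Q_k,W_k,\varepsilon^{(1)}_k,\varepsilon^{(2)}_k,Z^{(1)}_k,Z^{(2)}_k)\big)$; $Q_{k+1}=Q_k-\frac{1}{\mu\eta_Q}\nabla_Q L(\Omega_k,U_{k+1},Q_k,W_k,\varepsilon^{(1)}_k,\varepsilon^{(2)}_k,Z^{(1)}_k,Z^{(2)}_k)$; $W_{k+1}=W_k-\frac{1}{\mu\eta_W}\nabla_W L(\Omega_k,U_{k+1},Q_{k+1},W_k,\varepsilon^{(1)}_k,\varepsilon^{(2)}_k,Z^{(1)}_k,Z^{(2)}_k)$; $\Omega_{k+1}=\arg\min_\Omega L(\Omega,U_{k+1},Q_{k+1},W_{k+1},\varepsilon^{(1)}_k,\varepsilon^{(2)}_k,Z^{(1)}_k,Z^{(2)}_k)$; $\varepsilon^{(1)}_{k+1}=\arg\min_{\varepsilon^{(1)}} L(\Omega_{k+1},U_{k+1},Q_{k+1},W_{k+1},\varepsilon^{(1)},\varepsilon^{(2)}_k,Z^{(1)}_k,Z^{(2)}_k)$; $\varepsilon^{(2)}_{k+1}=\arg\min_{\varepsilon^{(2)}} L(\Omega_{k+1},U_{k+1},Q_{k+1},W_{k+1},\varepsilon^{(1)}_{k+1},\varepsilon^{(2)},Z^{(1)}_k,Z^{(2)}_k)$; $Z^{(1)}_{k+1}=Z^{(1)}_k+\mu(H-Q_{k+1}U_{k+1}-\varepsilon^{(1)}_{k+1})$;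 $Z^{(2)}_{k+1}=Z^{(2)}_k+\mu(Y-W_{k+1}Q_{k+1}U_{k+1}-\varepsilon^{(2)}_{k+1})$. The norm $\|\Theta\|$ is any norm continuous with respect to the Frobenius norms of the components (e.g. their sum). *)

theory Defs
  imports "HOL-Analysis.Analysis"
begin

definition l1norm :: "real^'n^'m \<Rightarrow> real" where
  "l1norm A = (\<Sum>i\<in>UNIV. \<Sum>j\<in>UNIV. \<bar>A$i$j\<bar>)"

definition soft :: "real \<Rightarrow> real \<Rightarrow> real" where
  "soft t x = sgn x * max (\<bar>x\<bar> - t) 0"

definition soft_mat :: "real \<Rightarrow> real^'n^'m \<Rightarrow> real^'n^'m" where
  "soft_mat t A = (\<chi> i j. soft t (A$i$j))"

definition grad :: "('a::real_inner \<Rightarrow> real) \<Rightarrow> 'a \<Rightarrow> 'a" where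
  "grad f x = (THE g. (f has_derivative (\<lambda>h. g \<bullet> h)) (at x))"

definition subdiff :: "('a::real_inner \<Rightarrow> real) \<Rightarrow> 'a \<Rightarrow> 'a set" where
  "subdiff f x = {g. \<forall>y. f x + g \<bullet> (y - x) \<le> f y}"

text \<open>Smooth part of the Lagrangian. Norms of matrices (real^'n^'m) are Frobenius norms,
  inner products are trace inner products.\<close>
definition Ls ::
  "real^'n^'m \<Rightarrow> real^'n^'s \<Rightarrow> real^'n^'c \<Rightarrow> real \<Rightarrow> real \<Rightarrow> real \<Rightarrow> real \<Rightarrow> real \<Rightarrow> real \<Rightarrow>
   real^'m^'r \<Rightarrow> real^'n^'r \<Rightarrow> real^'r^'s \<Rightarrow> real^'s^'c \<Rightarrow> real^'n^'s \<Rightarrow> real^'n^'c \<Rightarrow>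
   real^'n^'s \<Rightarrow> real^'n^'c \<Rightarrow> real" where
  "Ls X H Y \<rho>1 \<rho>2 \<delta>1 \<delta>2 lam2 \<mu> Om U Q W e1 e2 Z1 Z2 =
     1/2 * (norm (U - Om ** X))^2
     + \<rho>1/2 * (norm e1)^2 + \<rho>2/2 * (norm e2)^2
     + Z1 \<bullet> (H - Q ** U - e1) + Z2 \<bullet> (Y - (W ** Q) ** U - e2)
     + \<mu>/2 * (norm (H - Q ** U - e1))^2 + \<mu>/2 * (norm (Y - (W ** Q) ** U - e2))^2
     + \<delta>1/2 * (norm Q)^2 + \<delta>2/2 * (norm W)^2 + lam2/2 * (norm Om)^2"

definition Lag ::
  "real^'n^'m \<Rightarrow> real^'n^'s \<Rightarrow> real^'n^'c \<Rightarrow> real \<Rightarrow> real \<Rightarrow> real \<Rightarrow> real \<Rightarrow> real \<Rightarrow> real \<Rightarrow> real \<Rightarrow>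
   real^'m^'r \<Rightarrow> real^'n^'r \<Rightarrow> real^'r^'s \<Rightarrow> real^'s^'c \<Rightarrow> real^'n^'s \<Rightarrow> real^'n^'c \<Rightarrow>
   real^'n^'s \<Rightarrow> real^'n^'c \<Rightarrow> real" where
  "Lag X H Y lam1 \<rho>1 \<rho>2 \<delta>1 \<delta>2 lam2 \<mu> Om U Q W e1 e2 Z1 Z2 =
     Ls X H Y \<rho>1 \<rho>2 \<delta>1 \<delta>2 lam2 \<mu> Om U Q W e1 e2 Z1 Z2 + lam1 * l1norm U"

definition LsT ::
  "real^'n^'m \<Rightarrow> real^'n^'s \<Rightarrow> real^'n^'c \<Rightarrow> real \<Rightarrow> real \<Rightarrow> real \<Rightarrow> real \<Rightarrow> real \<Rightarrow> real \<Rightarrow>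
   ((real^'m^'r) \<times> (real^'n^'r) \<times> (real^'r^'s) \<times> (real^'s^'c) \<times> (real^'n^'s) \<times>
    (real^'n^'c) \<times> (real^'n^'s) \<times> (real^'n^'c)) \<Rightarrow> real" where
  "LsT X H Y \<rho>1 \<rho>2 \<delta>1 \<delta>2 lam2 \<mu> th =
     (case th of (Om, U, Q, W, e1, e2, Z1, Z2) \<Rightarrow>
        Ls X H Y \<rho>1 \<rho>2 \<delta>1 \<delta>2 lam2 \<mu> Om U Q W e1 e2 Z1 Z2)"

definition statset ::
  "real^'n^'m \<Rightarrow> real^'n^'s \<Rightarrow> real^'n^'c \<Rightarrow> real \<Rightarrow> real \<Rightarrow> real \<Rightarrow> real \<Rightarrow> real \<Rightarrow> real \<Rightarrow> real \<Rightarrow>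
   real \<Rightarrow>
   ((real^'m^'r) \<times> (real^'n^'r) \<times> (real^'r^'s) \<times> (real^'s^'c) \<times> (real^'n^'s) \<times>
    (real^'n^'c) \<times> (real^'n^'s) \<times> (real^'n^'c)) set" where
  "statset X H Y lam1 \<rho>1 \<rho>2 \<delta>1 \<delta>2 lam2 \<mu> R =
     {th. norm th < R
        \<and> - grad (LsT X H Y \<rho>1 \<rho>2 \<delta>1 \<delta>2 lam2 \<mu>) th
            \<in> (\<lambda>g. lam1 *\<^sub>R g) ` subdiff (\<lambda>th'. l1norm (fst (snd th'))) th
        \<and> (case th of (Om, U, Q, W, e1, e2, Z1, Z2) \<Rightarrow>
             H = Q ** U + e1 \<and> Y = (W ** Q) ** U + e2)}"

end

theory Submission
  imports Defs
begin

(* Each block update decreases the augmented Lagrangian by a multiple of its squared step: the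
   linearised U-, Q- and W-steps because the step parameters dominate the Lipschitz constants of
   the block gradients on a sublevel set, the exact Omega- and eps-minimisations by strong
   convexity. Optimality in eps together with the multiplier update forces Z(k+1) = rho eps(k+1),
   so the multiplier step raises the Lagrangian by at most (rho^2/mu) |Delta eps|^2 <= (mu/2)
   |Delta eps|^2, which the eps-steps pay for when mu >= sqrt 2 rho. Hence the Lagrangian stays
   below a bound fixed by the initial point, and since it is coercive once Z = rho eps, the
   iterates are bounded. Successive differences therefore vanish, the optimality conditions of the
   blocks pass to the limit along any convergent subsequence, and a bounded sequence all of whose
   limit points lie in S approaches S. *)

section \<open>Frobenius geometry of matrices\<close>

lemma inner_matrix_eq_sum: "(A::real^'n^'m) \<bullet> B = (\<Sum>i\<in>UNIV. \<Sum>j\<in>UNIV. A$i$j * B$i$j)"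
  by (simp add: inner_vec_def)

lemma norm_matrix_power2: "(norm (A::real^'n^'m))^2 = (\<Sum>i\<in>UNIV. \<Sum>j\<in>UNIV. (A$i$j)^2)"
  unfolding power2_norm_eq_inner inner_matrix_eq_sum by (simp add: power2_eq_square)

lemma inner_transpose: "transpose (A::real^'n^'m) \<bullet> transpose B = A \<bullet> B"
  by (simp add: inner_matrix_eq_sum transpose_def, rule sum.swap)

lemma transpose_zero [simp]: "transpose (0::real^'n^'m) = 0"
  by (simp add: transpose_def vec_eq_iff)

lemma norm_transpose: "norm (transpose (A::real^'n^'m)) = norm A"
  by (simp add: norm_eq_sqrt_inner inner_transpose)

lemma inner_matrix_mult_left: "((A::real^'k^'m) ** (B::real^'p^'k)) \<bullet> C = A \<bullet> (C ** transpose B)"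
proof -
  have "(A ** B) \<bullet> C = (\<Sum>i\<in>UNIV. \<Sum>p\<in>UNIV. \<Sum>j\<in>UNIV. A$i$j * B$j$p * C$i$p)"
    by (simp add: inner_matrix_eq_sum matrix_matrix_mult_def sum_distrib_right)
  also have "\<dots> = (\<Sum>i\<in>UNIV. \<Sum>j\<in>UNIV. \<Sum>p\<in>UNIV. A$i$j * B$j$p * C$i$p)"
    by (rule sum.cong, simp, rule sum.swap)
  also have "\<dots> = A \<bullet> (C ** transpose B)"
    by (simp add: inner_matrix_eq_sum matrix_matrix_mult_def transpose_def sum_distrib_left mult_ac)
  finally show ?thesis .
qed

lemma inner_matrix_mult_right: "((A::real^'k^'m) ** (B::real^'p^'k)) \<bullet> C = B \<bullet> (transpose A ** C)"
proof -
  have "(A ** B) \<bullet> C = (transpose B ** transpose A) \<bullet> transpose C"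
    by (metis inner_transpose matrix_transpose_mul)
  also have "\<dots> = transpose B \<bullet> transpose (transpose A ** C)"
    by (simp add: inner_matrix_mult_left matrix_transpose_mul)
  finally show ?thesis
    by (simp add: inner_transpose)
qed

(* Oriented so that simp moves every transpose out of a Frobenius inner product;
   this normal form makes the expansions of Ls below go through. *)
lemma inner_transpose_simps:
  fixes A :: "real^'k^'m" and B :: "real^'p^'k" and C :: "real^'p^'m"
  shows "A \<bullet> (C ** transpose B) = (A ** B) \<bullet> C" "(C ** transpose B) \<bullet> A = (A ** B) \<bullet> C"
    and "B \<bullet> (transpose A ** C) = (A ** B) \<bullet> C" "(transpose A ** C) \<bullet> B = (A ** B) \<bullet> C"
proof -
  show "A \<bullet> (C ** transpose B) = (A ** B) \<bullet> C" "(C ** transpose B) \<bullet> A = (A ** B) \<bullet> C"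
    by (metis inner_commute inner_matrix_mult_left)+
  show "B \<bullet> (transpose A ** C) = (A ** B) \<bullet> C" "(transpose A ** C) \<bullet> B = (A ** B) \<bullet> C"
    by (metis inner_commute inner_matrix_mult_right)+
qed

lemma norm_matrix_mult_le: "norm ((A::real^'k^'m) ** (B::real^'p^'k)) \<le> norm A * norm B"
proof -
  have row_col: "(\<Sum>j\<in>UNIV. A$i$j * B$j$p)^2 \<le> (\<Sum>j\<in>UNIV. (A$i$j)^2) * (\<Sum>j\<in>UNIV. (B$j$p)^2)" for i p
    using Cauchy_Schwarz_ineq[of "\<chi> j. A$i$j" "\<chi> j. B$j$p"]
    by (simp add: inner_vec_def power2_eq_square)
  have "(norm (A ** B))^2 = (\<Sum>i\<in>UNIV. \<Sum>p\<in>UNIV. (\<Sum>j\<in>UNIV. A$i$j * B$j$p)^2)"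
    by (simp add: norm_matrix_power2 matrix_matrix_mult_def)
  also have "\<dots> \<le> (\<Sum>i\<in>UNIV. \<Sum>p\<in>UNIV. (\<Sum>j\<in>UNIV. (A$i$j)^2) * (\<Sum>j\<in>UNIV. (B$j$p)^2))"
    by (intro sum_mono row_col)
  also have "\<dots> = (\<Sum>i\<in>UNIV. \<Sum>j\<in>UNIV. (A$i$j)^2) * (\<Sum>p\<in>UNIV. \<Sum>j\<in>UNIV. (B$j$p)^2)"
    by (simp only: sum_product)
  also have "\<dots> = (norm A)^2 * (norm B)^2"
    by (simp add: norm_matrix_power2, subst (2) sum.swap, simp)
  finally show ?thesis
    by (metis mult_nonneg_nonneg norm_ge_zero power2_le_imp_le power_mult_distrib)
qed

lemma norm_matrix_mult_power2_le:
  "(norm ((A::real^'k^'m) ** (B::real^'p^'k)))^2 \<le> (norm A)^2 * (norm B)^2"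
  by (metis norm_ge_zero norm_matrix_mult_le power_mono power_mult_distrib)

lemma power2_norm_matrix_mult3_le:
  "(norm ((A ** (B::real^'k^'l)) ** (C::real^'p^'k)))^2 \<le> (norm (A::real^'l^'m))^2 * (norm B)^2 * (norm C)^2"
  by (meson mult_right_mono norm_matrix_mult_power2_le order_trans zero_le_power2)

lemma bounded_bilinear_matrix_matrix_mult [bounded_bilinear]:
  "bounded_bilinear ((**) :: real^'k^'m \<Rightarrow> real^'p^'k \<Rightarrow> real^'p^'m)"
proof
  fix a a' :: "real^'k^'m" and b b' :: "real^'p^'k" and r :: real
  show "(a + a') ** b = a ** b + a' ** b"
    by (vector matrix_matrix_mult_def sum.distrib[symmetric] field_simps)
  show "a ** (b + b') = a ** b + a ** b'" by (rule matrix_add_ldistrib)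
  show "(r *\<^sub>R a) ** b = r *\<^sub>R (a ** b)" by (simp add: scalar_matrix_assoc)
  show "a ** (r *\<^sub>R b) = r *\<^sub>R (a ** b)" by (simp add: matrix_scalar_ac scalar_matrix_assoc)
  show "\<exists>K. \<forall>a b. norm ((a::real^'k^'m) ** (b::real^'p^'k)) \<le> norm a * norm b * K"
    by (rule exI[of _ 1]) (simp add: norm_matrix_mult_le)
qed

lemma bounded_linear_transpose [bounded_linear]: "bounded_linear (transpose :: real^'n^'m \<Rightarrow> real^'m^'n)"
  by (rule bounded_linear_intro[of _ 1])
     (vector transpose_def, simp add: transpose_scalar, simp add: norm_transpose)

lemmas matrix_mult_distribs =
  bounded_bilinear.add_left[OF bounded_bilinear_matrix_matrix_mult]
  bounded_bilinear.add_right[OF bounded_bilinear_matrix_matrix_mult]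
  bounded_bilinear.diff_left[OF bounded_bilinear_matrix_matrix_mult]
  bounded_bilinear.diff_right[OF bounded_bilinear_matrix_matrix_mult]
  bounded_bilinear.minus_left[OF bounded_bilinear_matrix_matrix_mult]
  bounded_bilinear.minus_right[OF bounded_bilinear_matrix_matrix_mult]
  bounded_bilinear.scaleR_left[OF bounded_bilinear_matrix_matrix_mult]
  bounded_bilinear.scaleR_right[OF bounded_bilinear_matrix_matrix_mult]

section \<open>The smooth part of the Lagrangian\<close>

definition Ls_grad_Om :: "real^'n^'m \<Rightarrow> real \<Rightarrow> real^'m^'r \<Rightarrow> real^'n^'r \<Rightarrow> real^'m^'r" where
  "Ls_grad_Om X lam2 Om U = lam2 *\<^sub>R Om - (U - Om ** X) ** transpose X"

definition Ls_grad_U ::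
  "real^'n^'m \<Rightarrow> real^'n^'s \<Rightarrow> real^'n^'c \<Rightarrow> real \<Rightarrow> real^'m^'r \<Rightarrow> real^'n^'r \<Rightarrow> real^'r^'s \<Rightarrow>
   real^'s^'c \<Rightarrow> real^'n^'s \<Rightarrow> real^'n^'c \<Rightarrow> real^'n^'s \<Rightarrow> real^'n^'c \<Rightarrow> real^'n^'r" where
  "Ls_grad_U X H Y \<mu> Om U Q W e1 e2 Z1 Z2 = (U - Om ** X)
     - transpose Q ** (Z1 + \<mu> *\<^sub>R (H - Q ** U - e1))
     - transpose (W ** Q) ** (Z2 + \<mu> *\<^sub>R (Y - (W ** Q) ** U - e2))"

definition Ls_grad_Q ::
  "real^'n^'s \<Rightarrow> real^'n^'c \<Rightarrow> real \<Rightarrow> real \<Rightarrow> real^'n^'r \<Rightarrow> real^'r^'s \<Rightarrow> real^'s^'c \<Rightarrow>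
   real^'n^'s \<Rightarrow> real^'n^'c \<Rightarrow> real^'n^'s \<Rightarrow> real^'n^'c \<Rightarrow> real^'r^'s" where
  "Ls_grad_Q H Y \<delta>1 \<mu> U Q W e1 e2 Z1 Z2 = \<delta>1 *\<^sub>R Q
     - (Z1 + \<mu> *\<^sub>R (H - Q ** U - e1)) ** transpose U
     - transpose W ** ((Z2 + \<mu> *\<^sub>R (Y - (W ** Q) ** U - e2)) ** transpose U)"

definition Ls_grad_W ::
  "real^'n^'c \<Rightarrow> real \<Rightarrow> real \<Rightarrow> real^'n^'r \<Rightarrow> real^'r^'s \<Rightarrow> real^'s^'c \<Rightarrow> real^'n^'c \<Rightarrow>
   real^'n^'c \<Rightarrow> real^'s^'c" where
  "Ls_grad_W Y \<delta>2 \<mu> U Q W e2 Z2 = \<delta>2 *\<^sub>R W - (Z2 + \<mu> *\<^sub>R (Y - (W ** Q) ** U - e2)) ** transpose (Q ** U)"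

definition LsT_grad ::
  "real^'n^'m \<Rightarrow> real^'n^'s \<Rightarrow> real^'n^'c \<Rightarrow> real \<Rightarrow> real \<Rightarrow> real \<Rightarrow> real \<Rightarrow> real \<Rightarrow> real \<Rightarrow>
   ((real^'m^'r) \<times> (real^'n^'r) \<times> (real^'r^'s) \<times> (real^'s^'c) \<times> (real^'n^'s) \<times>
    (real^'n^'c) \<times> (real^'n^'s) \<times> (real^'n^'c)) \<Rightarrow>
   ((real^'m^'r) \<times> (real^'n^'r) \<times> (real^'r^'s) \<times> (real^'s^'c) \<times> (real^'n^'s) \<times>
    (real^'n^'c) \<times> (real^'n^'s) \<times> (real^'n^'c))" where
  "LsT_grad X H Y \<rho>1 \<rho>2 \<delta>1 \<delta>2 lam2 \<mu> th = (case th of (Om, U, Q, W, e1, e2, Z1, Z2) \<Rightarrow>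
     (Ls_grad_Om X lam2 Om U, Ls_grad_U X H Y \<mu> Om U Q W e1 e2 Z1 Z2,
      Ls_grad_Q H Y \<delta>1 \<mu> U Q W e1 e2 Z1 Z2, Ls_grad_W Y \<delta>2 \<mu> U Q W e2 Z2,
      \<rho>1 *\<^sub>R e1 - Z1 - \<mu> *\<^sub>R (H - Q ** U - e1),
      \<rho>2 *\<^sub>R e2 - Z2 - \<mu> *\<^sub>R (Y - (W ** Q) ** U - e2),
      H - Q ** U - e1, Y - (W ** Q) ** U - e2))"

(* Projections instead of a case pattern, so that derivative_eq_intros applies. *)
lemma LsT_eq_Ls_components: "LsT X H Y \<rho>1 \<rho>2 \<delta>1 \<delta>2 lam2 \<mu> = (\<lambda>th. Ls X H Y \<rho>1 \<rho>2 \<delta>1 \<delta>2 lam2 \<mu>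
   (fst th) (fst (snd th)) (fst (snd (snd th))) (fst (snd (snd (snd th))))
   (fst (snd (snd (snd (snd th))))) (fst (snd (snd (snd (snd (snd th))))))
   (fst (snd (snd (snd (snd (snd (snd th)))))))  (snd (snd (snd (snd (snd (snd (snd th))))))))"
  by (auto simp: LsT_def fun_eq_iff split: prod.split)

lemmas Ls_expand_simps = Ls_def power2_norm_eq_inner inner_add_left inner_add_right inner_diff_left
  inner_diff_right matrix_mult_distribs inner_transpose_simps

lemma has_derivative_LsT:
  "(LsT X H Y \<rho>1 \<rho>2 \<delta>1 \<delta>2 lam2 \<mu> has_derivative (\<lambda>h. LsT_grad X H Y \<rho>1 \<rho>2 \<delta>1 \<delta>2 lam2 \<mu> th \<bullet> h)) (at th)"
  unfolding LsT_eq_Ls_components Ls_def power2_norm_eq_inner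
  apply (rule has_derivative_eq_rhs)
   apply (rule derivative_eq_intros | simp)+
  apply (cases th)
  apply (simp add: fun_eq_iff LsT_grad_def split: prod.split)
  apply (simp add: Ls_grad_Om_def Ls_grad_U_def Ls_grad_Q_def Ls_grad_W_def inner_add_left inner_add_right
     inner_diff_left inner_diff_right matrix_mult_distribs inner_transpose_simps)
  apply (simp add: inner_commute matrix_mul_assoc)
  apply (simp add: field_simps)
  done

lemma has_derivative_LsT_block:
  assumes emb: "(emb has_derivative d) (at x)"
    and f: "\<And>V. f V = LsT X H Y \<rho>1 \<rho>2 \<delta>1 \<delta>2 lam2 \<mu> (emb V) + c"
    and g: "\<And>h. LsT_grad X H Y \<rho>1 \<rho>2 \<delta>1 \<delta>2 lam2 \<mu> (emb x) \<bullet> d h = g \<bullet> h"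
  shows "(f has_derivative (\<lambda>h. g \<bullet> h)) (at x)"
proof -
  have "((\<lambda>V. LsT X H Y \<rho>1 \<rho>2 \<delta>1 \<delta>2 lam2 \<mu> (emb V) + c) has_derivative
      (\<lambda>h. LsT_grad X H Y \<rho>1 \<rho>2 \<delta>1 \<delta>2 lam2 \<mu> (emb x) \<bullet> d h)) (at x)"
    by (intro has_derivative_add_const has_derivative_compose[OF emb has_derivative_LsT])
  then show ?thesis
    unfolding g f[abs_def] .
qed

lemma grad_eqI: "(f has_derivative (\<lambda>h. g \<bullet> h)) (at x) \<Longrightarrow> grad f x = g"
  unfolding grad_def
proof (rule the_equality)
  fix g' assume "(f has_derivative (\<lambda>h. g \<bullet> h)) (at x)" and "(f has_derivative (\<lambda>h. g' \<bullet> h)) (at x)"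
  then have "(\<lambda>h. g' \<bullet> h) = (\<lambda>h. g \<bullet> h)" by (rule has_derivative_unique[rotated])
  then have "(g' - g) \<bullet> (g' - g) = 0" by (metis inner_diff_left right_minus_eq)
  then show "g' = g" by simp
qed

lemma has_derivative_zero_at_minimum:
  assumes "(f has_derivative (\<lambda>h. g \<bullet> h)) (at x)" "\<And>y. f x \<le> f y"
  shows "g = 0"
proof -
  have "(\<lambda>h. g \<bullet> h) = (\<lambda>h. 0)"
    by (rule has_derivative_local_min[OF assms(1)]) (simp add: assms(2))
  then have "g \<bullet> g = 0" by metis
  then show ?thesis by simp
qed

context
  fixes X :: "real^'n^'m" and H :: "real^'n^'s" and Y :: "real^'n^'c"
    and lam1 lam2 \<rho>1 \<rho>2 \<delta>1 \<delta>2 \<mu> :: real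
begin

lemma has_derivative_Lag_Om:
  "((\<lambda>V. Lag X H Y lam1 \<rho>1 \<rho>2 \<delta>1 \<delta>2 lam2 \<mu> V U Q W e1 e2 Z1 Z2)
     has_derivative (\<lambda>h. Ls_grad_Om X lam2 Om U \<bullet> h)) (at Om)"
  by (rule has_derivative_LsT_block[where emb = "\<lambda>V. (V, U, Q, W, e1, e2, Z1, Z2)"])
     (auto intro!: derivative_eq_intros simp: Lag_def LsT_def LsT_grad_def zero_prod_def)

lemma has_derivative_Ls_U:
  "((\<lambda>V. Ls X H Y \<rho>1 \<rho>2 \<delta>1 \<delta>2 lam2 \<mu> Om V Q W e1 e2 Z1 Z2)
     has_derivative (\<lambda>h. Ls_grad_U X H Y \<mu> Om U Q W e1 e2 Z1 Z2 \<bullet> h)) (at U)"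
  by (rule has_derivative_LsT_block[where emb = "\<lambda>V. (Om, V, Q, W, e1, e2, Z1, Z2)" and c = 0])
     (auto intro!: derivative_eq_intros simp: LsT_def LsT_grad_def zero_prod_def)

lemma has_derivative_Lag_Q:
  "((\<lambda>V. Lag X H Y lam1 \<rho>1 \<rho>2 \<delta>1 \<delta>2 lam2 \<mu> Om U V W e1 e2 Z1 Z2)
     has_derivative (\<lambda>h. Ls_grad_Q H Y \<delta>1 \<mu> U Q W e1 e2 Z1 Z2 \<bullet> h)) (at Q)"
  by (rule has_derivative_LsT_block[where emb = "\<lambda>V. (Om, U, V, W, e1, e2, Z1, Z2)"])
     (auto intro!: derivative_eq_intros simp: Lag_def LsT_def LsT_grad_def zero_prod_def)

lemma has_derivative_Lag_W:
  "((\<lambda>V. Lag X H Y lam1 \<rho>1 \<rho>2 \<delta>1 \<delta>2 lam2 \<mu> Om U Q V e1 e2 Z1 Z2)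
     has_derivative (\<lambda>h. Ls_grad_W Y \<delta>2 \<mu> U Q W e2 Z2 \<bullet> h)) (at W)"
  by (rule has_derivative_LsT_block[where emb = "\<lambda>V. (Om, U, Q, V, e1, e2, Z1, Z2)"])
     (auto intro!: derivative_eq_intros simp: Lag_def LsT_def LsT_grad_def zero_prod_def)

lemma has_derivative_Lag_e1:
  "((\<lambda>V. Lag X H Y lam1 \<rho>1 \<rho>2 \<delta>1 \<delta>2 lam2 \<mu> Om U Q W V e2 Z1 Z2)
     has_derivative (\<lambda>h. (\<rho>1 *\<^sub>R e1 - Z1 - \<mu> *\<^sub>R (H - Q ** U - e1)) \<bullet> h)) (at e1)"
  by (rule has_derivative_LsT_block[where emb = "\<lambda>V. (Om, U, Q, W, V, e2, Z1, Z2)"])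
     (auto intro!: derivative_eq_intros simp: Lag_def LsT_def LsT_grad_def zero_prod_def)

lemma has_derivative_Lag_e2:
  "((\<lambda>V. Lag X H Y lam1 \<rho>1 \<rho>2 \<delta>1 \<delta>2 lam2 \<mu> Om U Q W e1 V Z1 Z2)
     has_derivative (\<lambda>h. (\<rho>2 *\<^sub>R e2 - Z2 - \<mu> *\<^sub>R (Y - (W ** Q) ** U - e2)) \<bullet> h)) (at e2)"
  by (rule has_derivative_LsT_block[where emb = "\<lambda>V. (Om, U, Q, W, e1, V, Z1, Z2)"])
     (auto intro!: derivative_eq_intros simp: Lag_def LsT_def LsT_grad_def zero_prod_def)

(* Ls is quadratic in each block separately, so these expansions are exact. *)
lemma Ls_expand_U:
  "Ls X H Y \<rho>1 \<rho>2 \<delta>1 \<delta>2 lam2 \<mu> Om (U + h) Q W e1 e2 Z1 Z2 =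
     Ls X H Y \<rho>1 \<rho>2 \<delta>1 \<delta>2 lam2 \<mu> Om U Q W e1 e2 Z1 Z2 + Ls_grad_U X H Y \<mu> Om U Q W e1 e2 Z1 Z2 \<bullet> h
     + (1/2 * (norm h)^2 + \<mu>/2 * (norm (Q ** h))^2 + \<mu>/2 * (norm ((W ** Q) ** h))^2)"
  apply (simp add: Ls_expand_simps Ls_grad_U_def)
  apply (simp add: inner_commute matrix_mul_assoc)
  apply (simp add: field_simps)
  done

lemma Ls_expand_Q:
  "Ls X H Y \<rho>1 \<rho>2 \<delta>1 \<delta>2 lam2 \<mu> Om U (Q + h) W e1 e2 Z1 Z2 =
     Ls X H Y \<rho>1 \<rho>2 \<delta>1 \<delta>2 lam2 \<mu> Om U Q W e1 e2 Z1 Z2 + Ls_grad_Q H Y \<delta>1 \<mu> U Q W e1 e2 Z1 Z2 \<bullet> h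
     + (\<mu>/2 * (norm (h ** U))^2 + \<mu>/2 * (norm ((W ** h) ** U))^2 + \<delta>1/2 * (norm h)^2)"
  apply (simp add: Ls_expand_simps Ls_grad_Q_def)
  apply (simp add: inner_commute matrix_mul_assoc)
  apply (simp add: field_simps)
  done

lemma Ls_expand_W:
  "Ls X H Y \<rho>1 \<rho>2 \<delta>1 \<delta>2 lam2 \<mu> Om U Q (W + h) e1 e2 Z1 Z2 =
     Ls X H Y \<rho>1 \<rho>2 \<delta>1 \<delta>2 lam2 \<mu> Om U Q W e1 e2 Z1 Z2 + Ls_grad_W Y \<delta>2 \<mu> U Q W e2 Z2 \<bullet> h
     + (\<mu>/2 * (norm ((h ** Q) ** U))^2 + \<delta>2/2 * (norm h)^2)"
  apply (simp add: Ls_expand_simps Ls_grad_W_def)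
  apply (simp add: inner_commute matrix_mul_assoc)
  apply (simp add: field_simps)
  done

lemma Ls_expand_Om:
  "Ls X H Y \<rho>1 \<rho>2 \<delta>1 \<delta>2 lam2 \<mu> (Om + h) U Q W e1 e2 Z1 Z2 =
     Ls X H Y \<rho>1 \<rho>2 \<delta>1 \<delta>2 lam2 \<mu> Om U Q W e1 e2 Z1 Z2 + Ls_grad_Om X lam2 Om U \<bullet> h
     + (1/2 * (norm (h ** X))^2 + lam2/2 * (norm h)^2)"
  apply (simp add: Ls_expand_simps Ls_grad_Om_def)
  apply (simp add: inner_commute matrix_mul_assoc)
  apply (simp add: field_simps)
  done

lemma Ls_expand_e1:
  "Ls X H Y \<rho>1 \<rho>2 \<delta>1 \<delta>2 lam2 \<mu> Om U Q W (e1 + h) e2 Z1 Z2 =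
     Ls X H Y \<rho>1 \<rho>2 \<delta>1 \<delta>2 lam2 \<mu> Om U Q W e1 e2 Z1 Z2
     + (\<rho>1 *\<^sub>R e1 - Z1 - \<mu> *\<^sub>R (H - Q ** U - e1)) \<bullet> h + (\<rho>1 + \<mu>)/2 * (norm h)^2"
  apply (simp add: Ls_expand_simps)
  apply (simp add: inner_commute matrix_mul_assoc)
  apply (simp add: field_simps)
  done

lemma Ls_expand_e2:
  "Ls X H Y \<rho>1 \<rho>2 \<delta>1 \<delta>2 lam2 \<mu> Om U Q W e1 (e2 + h) Z1 Z2 =
     Ls X H Y \<rho>1 \<rho>2 \<delta>1 \<delta>2 lam2 \<mu> Om U Q W e1 e2 Z1 Z2
     + (\<rho>2 *\<^sub>R e2 - Z2 - \<mu> *\<^sub>R (Y - (W ** Q) ** U - e2)) \<bullet> h + (\<rho>2 + \<mu>)/2 * (norm h)^2"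
  apply (simp add: Ls_expand_simps)
  apply (simp add: inner_commute matrix_mul_assoc)
  apply (simp add: field_simps)
  done

lemma Ls_smooth_U:
  assumes "\<mu> \<ge> 0"
  shows "Ls X H Y \<rho>1 \<rho>2 \<delta>1 \<delta>2 lam2 \<mu> Om (U + h) Q W e1 e2 Z1 Z2
    \<le> Ls X H Y \<rho>1 \<rho>2 \<delta>1 \<delta>2 lam2 \<mu> Om U Q W e1 e2 Z1 Z2 + Ls_grad_U X H Y \<mu> Om U Q W e1 e2 Z1 Z2 \<bullet> h
      + (1 + \<mu> * (norm Q)^2 + \<mu> * (norm W)^2 * (norm Q)^2) / 2 * (norm h)^2"
proof -
  have "\<mu>/2 * (norm (Q ** h))^2 \<le> \<mu>/2 * ((norm Q)^2 * (norm h)^2)"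
    using assms norm_matrix_mult_power2_le[of Q h] by (intro mult_left_mono) auto
  moreover have "\<mu>/2 * (norm ((W ** Q) ** h))^2 \<le> \<mu>/2 * ((norm W)^2 * (norm Q)^2 * (norm h)^2)"
    using assms power2_norm_matrix_mult3_le[of W Q h] by (intro mult_left_mono) auto
  ultimately show ?thesis
    unfolding Ls_expand_U by (simp add: algebra_simps add_divide_distrib)
qed

lemma Ls_smooth_Q:
  assumes "\<mu> \<ge> 0"
  shows "Ls X H Y \<rho>1 \<rho>2 \<delta>1 \<delta>2 lam2 \<mu> Om U (Q + h) W e1 e2 Z1 Z2
    \<le> Ls X H Y \<rho>1 \<rho>2 \<delta>1 \<delta>2 lam2 \<mu> Om U Q W e1 e2 Z1 Z2 + Ls_grad_Q H Y \<delta>1 \<mu> U Q W e1 e2 Z1 Z2 \<bullet> h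
      + (\<mu> * (norm U)^2 + \<mu> * (norm W)^2 * (norm U)^2 + \<delta>1) / 2 * (norm h)^2"
proof -
  have "\<mu>/2 * (norm (h ** U))^2 \<le> \<mu>/2 * ((norm h)^2 * (norm U)^2)"
    using assms norm_matrix_mult_power2_le[of h U] by (intro mult_left_mono) auto
  moreover have "\<mu>/2 * (norm ((W ** h) ** U))^2 \<le> \<mu>/2 * ((norm W)^2 * (norm h)^2 * (norm U)^2)"
    using assms power2_norm_matrix_mult3_le[of W h U] by (intro mult_left_mono) auto
  ultimately show ?thesis
    unfolding Ls_expand_Q by (simp add: algebra_simps add_divide_distrib)
qed

lemma Ls_smooth_W:
  assumes "\<mu> \<ge> 0"
  shows "Ls X H Y \<rho>1 \<rho>2 \<delta>1 \<delta>2 lam2 \<mu> Om U Q (W + h) e1 e2 Z1 Z2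
    \<le> Ls X H Y \<rho>1 \<rho>2 \<delta>1 \<delta>2 lam2 \<mu> Om U Q W e1 e2 Z1 Z2 + Ls_grad_W Y \<delta>2 \<mu> U Q W e2 Z2 \<bullet> h
      + (\<mu> * (norm Q)^2 * (norm U)^2 + \<delta>2) / 2 * (norm h)^2"
proof -
  have "\<mu>/2 * (norm ((h ** Q) ** U))^2 \<le> \<mu>/2 * ((norm h)^2 * (norm Q)^2 * (norm U)^2)"
    using assms power2_norm_matrix_mult3_le[of h Q U] by (intro mult_left_mono) auto
  then show ?thesis
    unfolding Ls_expand_W by (simp add: algebra_simps add_divide_distrib)
qed

end

section \<open>Soft thresholding and linearised proximal steps\<close>

lemma soft_prox:
  assumes "t \<ge> 0"
  shows "t * \<bar>soft t x\<bar> + (soft t x - x)^2 / 2 \<le> t * \<bar>w\<bar> + (w - x)^2 / 2"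
proof -
  have tw: "t * w \<le> t * \<bar>w\<bar>" "- (t * w) \<le> t * \<bar>w\<bar>"
    using assms mult_left_mono[of w "\<bar>w\<bar>" t] mult_left_mono[of "- w" "\<bar>w\<bar>" t] by simp_all
  consider "t \<le> x" | "x \<le> - t" | "\<bar>x\<bar> < t" by linarith
  then show ?thesis
  proof cases
    case 1
    then have s: "soft t x = x - t" using assms by (simp add: soft_def sgn_if)
    have "t * \<bar>x - t\<bar> = t * x - t^2" using 1 by (simp add: power2_eq_square algebra_simps)
    moreover have "(w - x + t)^2 = (w - x)^2 + 2 * (t * w) - 2 * (t * x) + t^2"
      by (simp add: power2_eq_square algebra_simps)
    ultimately show ?thesis unfolding s using tw zero_le_power2[of "w - x + t"] by simp
  next
    case 2
    then have s: "soft t x = x + t" using assms by (auto simp: soft_def sgn_if)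
    have "t * \<bar>x + t\<bar> = - (t * x) - t^2" using 2 by (simp add: power2_eq_square algebra_simps)
    moreover have "(w - x - t)^2 = (w - x)^2 - 2 * (t * w) + 2 * (t * x) + t^2"
      by (simp add: power2_eq_square algebra_simps)
    ultimately show ?thesis unfolding s using tw zero_le_power2[of "w - x - t"] by simp
  next
    case 3
    then have s: "soft t x = 0" by (simp add: soft_def)
    have "w * x \<le> t * \<bar>w\<bar>"
      using 3 abs_ge_self[of "w * x"] mult_left_mono[of "\<bar>x\<bar>" t "\<bar>w\<bar>"]
      by (simp add: abs_mult mult.commute)
    moreover have "(w - x)^2 = w^2 - 2 * (w * x) + x^2"
      by (simp add: power2_eq_square algebra_simps)
    ultimately have "x^2 / 2 \<le> t * \<bar>w\<bar> + (w - x)^2 / 2"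
      using zero_le_power2[of w] by linarith
    then show ?thesis unfolding s by simp
  qed
qed

lemma soft_mat_prox:
  assumes "t \<ge> 0"
  shows "t * l1norm (soft_mat t A) + (norm (soft_mat t A - A))^2 / 2 \<le> t * l1norm V + (norm (V - A))^2 / 2"
proof -
  have "t * l1norm (soft_mat t A) + (norm (soft_mat t A - A))^2 / 2
     = (\<Sum>i\<in>UNIV. \<Sum>j\<in>UNIV. t * \<bar>soft t (A$i$j)\<bar> + (soft t (A$i$j) - A$i$j)^2 / 2)"
    by (simp add: l1norm_def norm_matrix_power2 soft_mat_def sum_distrib_left sum.distrib sum_divide_distrib)
  also have "\<dots> \<le> (\<Sum>i\<in>UNIV. \<Sum>j\<in>UNIV. t * \<bar>V$i$j\<bar> + (V$i$j - A$i$j)^2 / 2)"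
    by (intro sum_mono soft_prox assms)
  also have "\<dots> = t * l1norm V + (norm (V - A))^2 / 2"
    by (simp add: l1norm_def norm_matrix_power2 sum_distrib_left sum.distrib sum_divide_distrib)
  finally show ?thesis .
qed

lemma soft_mat_linearized_prox:
  fixes U g V :: "real^'n^'m"
  assumes c: "c > 0" and "lam \<ge> 0"
  defines "U' \<equiv> soft_mat (lam / c) (U - (1/c) *\<^sub>R g)"
  shows "lam * l1norm U' + g \<bullet> (U' - U) + c/2 * (norm (U' - U))^2
     \<le> lam * l1norm V + g \<bullet> (V - U) + c/2 * (norm (V - U))^2"
proof -
  have scaled: "c * ((lam/c) * l1norm W + (norm (W - (U - (1/c) *\<^sub>R g)))^2 / 2)
      = lam * l1norm W + g \<bullet> (W - U) + c/2 * (norm (W - U))^2 + (norm g)^2 / (2 * c)" for W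
    using c by (simp add: power2_norm_eq_inner inner_add_left inner_add_right inner_diff_left inner_diff_right
        inner_commute field_simps)
  have "(lam/c) * l1norm U' + (norm (U' - (U - (1/c) *\<^sub>R g)))^2 / 2
      \<le> (lam/c) * l1norm V + (norm (V - (U - (1/c) *\<^sub>R g)))^2 / 2"
    unfolding U'_def by (rule soft_mat_prox) (use assms in simp)
  then have "c * ((lam/c) * l1norm U' + (norm (U' - (U - (1/c) *\<^sub>R g)))^2 / 2)
      \<le> c * ((lam/c) * l1norm V + (norm (V - (U - (1/c) *\<^sub>R g)))^2 / 2)"
    using c by (simp add: mult_left_mono)
  then show ?thesis
    unfolding scaled by simp
qed

lemma norm_le_l1norm: "norm (U::real^'n^'m) \<le> l1norm U"
proof -
  have "norm U \<le> (\<Sum>i\<in>UNIV. norm (U$i))"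
    unfolding norm_vec_def by (rule L2_set_le_sum) simp
  also have "\<dots> \<le> (\<Sum>i\<in>UNIV. \<Sum>j\<in>UNIV. \<bar>U$i$j\<bar>)"
    by (intro sum_mono norm_le_l1_cart)
  finally show ?thesis by (simp add: l1norm_def)
qed

lemma convex_on_l1norm: "convex_on UNIV (l1norm :: real^'n^'m \<Rightarrow> real)"
proof (rule convex_onI)
  fix t :: real and a b :: "real^'n^'m"
  assume "0 < t" "t < 1"
  then have "\<bar>(1 - t) * a$i$j + t * b$i$j\<bar> \<le> (1 - t) * \<bar>a$i$j\<bar> + t * \<bar>b$i$j\<bar>" for i j
    using abs_triangle_ineq[of "(1 - t) * a$i$j" "t * b$i$j"] by (simp add: abs_mult)
  then have "l1norm ((1 - t) *\<^sub>R a + t *\<^sub>R b) \<le> (\<Sum>i\<in>UNIV. \<Sum>j\<in>UNIV. (1 - t) * \<bar>a$i$j\<bar> + t * \<bar>b$i$j\<bar>)"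
    by (simp add: l1norm_def sum_mono)
  also have "\<dots> = (1 - t) * l1norm a + t * l1norm b"
    by (simp add: l1norm_def sum.distrib sum_distrib_left)
  finally show "l1norm ((1 - t) *\<^sub>R a + t *\<^sub>R b) \<le> (1 - t) * l1norm a + t * l1norm b" .
qed simp

lemma tendsto_l1norm [tendsto_intros]:
  "(f \<longlongrightarrow> (a::real^'n^'m)) F \<Longrightarrow> ((\<lambda>k. l1norm (f k)) \<longlongrightarrow> l1norm a) F"
  unfolding l1norm_def by (intro tendsto_intros)

lemma subgradient_of_proximal_min:
  fixes \<phi> :: "'a::real_inner \<Rightarrow> real"
  assumes cvx: "convex_on UNIV \<phi>" and c: "c \<ge> 0"
    and min: "\<And>v. \<phi> u \<le> \<phi> v + g \<bullet> (v - u) + c/2 * (norm (v - u))^2"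
  shows "\<phi> u - g \<bullet> (y - u) \<le> \<phi> y"
proof -
  define a where "a = \<phi> y - \<phi> u + g \<bullet> (y - u)"
  have small_steps: "0 \<le> a + c * s / 2 * (norm (y - u))^2" if s: "0 < s" "s \<le> 1" for s
  proof -
    have "\<phi> u \<le> \<phi> (u + s *\<^sub>R (y - u)) + s * (g \<bullet> (y - u)) + c/2 * s^2 * (norm (y - u))^2"
      using min[of "u + s *\<^sub>R (y - u)"] s by (simp add: power_mult_distrib)
    also have "\<phi> (u + s *\<^sub>R (y - u)) \<le> (1 - s) * \<phi> u + s * \<phi> y"
      using convex_onD[OF cvx, of s u y] s by (simp add: algebra_simps)
    finally have "0 \<le> s * (a + c * s / 2 * (norm (y - u))^2)"
      unfolding a_def by (simp add: algebra_simps power2_eq_square)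
    then show ?thesis using s by (simp add: zero_le_mult_iff)
  qed
  have lim: "(\<lambda>n. a + c * inverse (real (Suc n)) / 2 * (norm (y - u))^2) \<longlonglongrightarrow> a + c * 0 / 2 * (norm (y - u))^2"
    by (intro tendsto_intros LIMSEQ_inverse_real_of_nat) simp_all
  have "\<forall>n. 0 \<le> a + c * inverse (real (Suc n)) / 2 * (norm (y - u))^2"
    by (intro allI small_steps) (simp_all add: inverse_le_1_iff)
  then have "0 \<le> a + c * 0 / 2 * (norm (y - u))^2"
    by (rule tendsto_lowerbound[OF lim always_eventually sequentially_bot])
  then show ?thesis unfolding a_def by simp
qed

lemma gradient_step_linearization:
  assumes "x' = x - (1/c) *\<^sub>R g" "c > 0"
  shows "g \<bullet> (x' - x) + c/2 * (norm (x' - x))^2 \<le> 0"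
proof -
  have step: "x' - x = - (1/c) *\<^sub>R g" using assms(1) by simp
  have "g \<bullet> (x' - x) + c/2 * (norm (x' - x))^2 = - ((norm g)^2 / (2 * c))"
    unfolding step using assms(2) by (simp add: field_simps power2_eq_square flip: power2_norm_eq_inner)
  then show ?thesis using assms(2) by simp
qed

lemma linearized_step_descent:
  fixes f \<phi> :: "'a::real_inner \<Rightarrow> real"
  assumes smooth: "f x' \<le> f x + g \<bullet> (x' - x) + M/2 * (norm (x' - x))^2"
    and step: "\<phi> x' + g \<bullet> (x' - x) + c/2 * (norm (x' - x))^2 \<le> \<phi> x"
    and c: "M + 1 \<le> c"
  shows "f x' + \<phi> x' + 1/2 * (norm (x' - x))^2 \<le> f x + \<phi> x"
proof -
  have "(M + 1) * (norm (x' - x))^2 \<le> c * (norm (x' - x))^2"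
    using c by (simp add: mult_right_mono)
  then show ?thesis using smooth step by (simp add: algebra_simps)
qed

section \<open>Coercivity of the Lagrangian\<close>

lemma inner_add_power2_lower_bound:
  assumes "\<mu> > 0"
  shows "- ((norm Z)^2 / (2 * \<mu>)) \<le> Z \<bullet> r + \<mu>/2 * (norm r)^2"
proof -
  have "0 \<le> (norm (Z + \<mu> *\<^sub>R r))^2" by simp
  also have "\<dots> = (norm Z)^2 + 2 * \<mu> * (Z \<bullet> r) + \<mu>^2 * (norm r)^2"
    unfolding power2_norm_eq_inner by (simp add: inner_add_left inner_add_right inner_commute power2_eq_square)
  finally show ?thesis using assms by (simp add: field_simps power2_eq_square)
qed

lemma Lag_lower_bound:
  assumes "\<mu> > 0" "lam1 \<ge> 0"
  shows "lam1 * norm U + \<delta>1/2 * (norm Q)^2 + \<delta>2/2 * (norm W)^2 + lam2/2 * (norm Om)^2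
      + \<rho>1/2 * (norm e1)^2 + \<rho>2/2 * (norm e2)^2 - (norm Z1)^2 / (2 * \<mu>) - (norm Z2)^2 / (2 * \<mu>)
    \<le> Lag X H Y lam1 \<rho>1 \<rho>2 \<delta>1 \<delta>2 lam2 \<mu> Om U Q W e1 e2 Z1 Z2"
  using inner_add_power2_lower_bound[OF assms(1), of Z1 "H - Q ** U - e1"]
    inner_add_power2_lower_bound[OF assms(1), of Z2 "Y - (W ** Q) ** U - e2"]
    mult_left_mono[OF norm_le_l1norm assms(2), of U] zero_le_power2[of "norm (U - Om ** X)"]
  unfolding Lag_def Ls_def by linarith

lemma power2_norm_diff_le: "(norm (a - b))^2 \<le> 2 * (norm a)^2 + 2 * (norm b)^2"
proof -
  have "(norm (a - b))^2 \<le> (norm a + norm b)^2"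
    by (simp add: norm_triangle_ineq4 power_mono)
  also have "\<dots> \<le> 2 * (norm a)^2 + 2 * (norm b)^2"
    using zero_le_power2[of "norm a - norm b"] by (simp add: power2_eq_square algebra_simps)
  finally show ?thesis .
qed

lemma tendsto_Pair_iff: "((\<lambda>x. (f x, g x)) \<longlongrightarrow> (a, b)) F \<longleftrightarrow> (f \<longlongrightarrow> a) F \<and> (g \<longlongrightarrow> b) F"
  using tendsto_fst[of "\<lambda>x. (f x, g x)" "(a, b)" F] tendsto_snd[of "\<lambda>x. (f x, g x)" "(a, b)" F]
  by (auto intro: tendsto_Pair)

lemma LIMSEQ_Suc_subseq:
  fixes f :: "nat \<Rightarrow> 'a::real_normed_vector"
  assumes "(\<lambda>j. f (s j)) \<longlonglongrightarrow> a" and "(\<lambda>k. f (Suc k) - f k) \<longlonglongrightarrow> 0" and "strict_mono s"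
  shows "(\<lambda>j. f (Suc (s j))) \<longlonglongrightarrow> a"
proof -
  have "(\<lambda>j. f (Suc (s j)) - f (s j)) \<longlonglongrightarrow> 0"
    using LIMSEQ_subseq_LIMSEQ[OF assms(2,3)] by (simp add: o_def)
  from tendsto_add[OF assms(1) this] show ?thesis by simp
qed

lemma sufficient_decrease_tendsto_zero:
  fixes a d :: "nat \<Rightarrow> real"
  assumes decrease: "\<And>k. a (Suc k) + d k \<le> a k" and d: "\<And>k. 0 \<le> d k" and bounded: "\<And>k. b \<le> a k"
  shows "d \<longlonglongrightarrow> 0"
proof (rule tendsto_sandwich[OF always_eventually always_eventually tendsto_const])
  have "decseq a"
  proof (rule decseq_SucI)
    show "a (Suc k) \<le> a k" for k using decrease[of k] d[of k] by linarith
  qed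
  then obtain L where "a \<longlonglongrightarrow> L" using decseq_convergent bounded by blast
  from tendsto_diff[OF this LIMSEQ_Suc[OF this]] show "(\<lambda>k. a k - a (Suc k)) \<longlonglongrightarrow> 0" by simp
  show "\<forall>k. 0 \<le> d k" using d by simp
  show "\<forall>k. d k \<le> a k - a (Suc k)" using decrease by (simp add: le_diff_eq add.commute)
qed

lemma tendsto_zero_if_power2_norm_le:
  fixes f :: "nat \<Rightarrow> 'a::real_normed_vector"
  assumes le: "\<And>k. (norm (f k))^2 \<le> C * d k" and d: "d \<longlonglongrightarrow> 0"
  shows "f \<longlonglongrightarrow> 0"
proof -
  have "(\<lambda>k. (norm (f k))^2) \<longlonglongrightarrow> 0"
  proof (rule tendsto_sandwich[OF always_eventually always_eventually tendsto_const])
    show "(\<lambda>k. C * d k) \<longlonglongrightarrow> 0" using tendsto_mult_right_zero[OF d] .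
  qed (use le in simp_all)
  then have "(\<lambda>k. sqrt ((norm (f k))^2)) \<longlonglongrightarrow> sqrt 0" by (rule tendsto_real_sqrt)
  then show ?thesis by (simp add: tendsto_norm_zero_iff)
qed

lemma infdist_tendsto_zero_if_limit_points_in:
  fixes x :: "nat \<Rightarrow> 'a::{heine_borel,real_normed_vector}"
  assumes bnd: "\<And>k. norm (x k) \<le> B"
    and lim: "\<And>r l. strict_mono r \<Longrightarrow> (x \<circ> r) \<longlonglongrightarrow> l \<Longrightarrow> l \<in> S"
  shows "(\<lambda>k. infdist (x k) S) \<longlonglongrightarrow> 0"
proof (rule LIMSEQ_I)
  fix e :: real assume e: "0 < e"
  show "\<exists>N. \<forall>n\<ge>N. norm (infdist (x n) S - 0) < e"
  proof (rule ccontr)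
    assume "\<not> (\<exists>N. \<forall>n\<ge>N. norm (infdist (x n) S - 0) < e)"
    then have "\<forall>N. \<exists>n\<ge>N. e \<le> infdist (x n) S"
      by (auto simp: infdist_nonneg not_less)
    then have "infinite {n. e \<le> infdist (x n) S}"
      unfolding infinite_nat_iff_unbounded_le by blast
    then obtain r :: "nat \<Rightarrow> nat" where r: "strict_mono r" "\<forall>j. r j \<in> {n. e \<le> infdist (x n) S}"
      using infinite_enumerate by blast
    have "bounded (range (x \<circ> r))" using bnd by (auto intro!: boundedI)
    then obtain l s where s: "strict_mono s" and conv: "((x \<circ> r) \<circ> s) \<longlonglongrightarrow> l"
      using bounded_imp_convergent_subsequence by blast
    have "l \<in> S"
      using lim[of "r \<circ> s" l] conv strict_mono_o[OF r(1) s] by (simp add: o_assoc)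
    obtain j where "dist (x (r (s j))) l < e"
      using tendstoD[OF conv e] by (auto dest: eventually_happens)
    moreover have "infdist (x (r (s j))) S \<le> dist (x (r (s j))) l"
      by (rule infdist_le[OF \<open>l \<in> S\<close>])
    ultimately show False using r(2) by (metis (no_types, lifting) mem_Collect_eq order.trans not_le)
  qed
qed

section \<open>Constants determined by the initial point\<close>

locale ladm =
  fixes X :: "real^'n^'m" and H :: "real^'n^'s" and Y :: "real^'n^'c"
    and lam1 lam2 \<rho>1 \<rho>2 \<delta>1 \<delta>2 \<mu> :: real
    and Om0 :: "real^'m^'r" and U0 :: "real^'n^'r" and Q0 :: "real^'r^'s" and W0 :: "real^'s^'c"
    and E10 :: "real^'n^'s" and E20 :: "real^'n^'c" and Z10 :: "real^'n^'s" and Z20 :: "real^'n^'c"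
  assumes pos: "lam1 > 0" "lam2 > 0" "\<rho>1 > 0" "\<rho>2 > 0" "\<delta>1 > 0" "\<delta>2 > 0" "\<mu> > 0"
    and mu_ge: "\<mu> \<ge> sqrt 2 * max \<rho>1 \<rho>2"
begin

abbreviation "ls \<equiv> Ls X H Y \<rho>1 \<rho>2 \<delta>1 \<delta>2 lam2 \<mu>"
abbreviation "lag \<equiv> Lag X H Y lam1 \<rho>1 \<rho>2 \<delta>1 \<delta>2 lam2 \<mu>"

definition "lag_init = lag Om0 U0 Q0 W0 E10 E20 Z10 Z20"
definition "dual_init = ((norm Z10)^2 + (norm Z20)^2) / (2 * \<mu>)"
(* The first multiplier step starts from arbitrary Z0 and is paid for separately
   (lag_first_iterate_le); from then on the Lagrangian decreases. *)
definition "lag_max =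
  lag_init + (4 * (\<rho>1 + \<rho>2) * (lag_init + dual_init) + 2 * ((norm Z10)^2 + (norm Z20)^2)) / \<mu>"

definition "block_bound = lag_max + dual_init"
definition "bound_U = block_bound / lam1"
definition "bound_Q2 = 2 * block_bound / \<delta>1"
definition "bound_W2 = 2 * block_bound / \<delta>2"

(* Lipschitz constants of the U-, Q- and W-gradients of Ls on the sublevel set
   {lag <= lag_max}; the step parameters are required to exceed them. *)
definition "lip_U = 1 + \<mu> * bound_Q2 + \<mu> * bound_W2 * bound_Q2"
definition "lip_Q = \<mu> * bound_U^2 + \<mu> * bound_W2 * bound_U^2 + \<delta>1"
definition "lip_W = \<mu> * bound_Q2 * bound_U^2 + \<delta>2"
definition "eta_U0 = (lip_U + 1) / \<mu>"
definition "eta_Q0 = (lip_Q + 1) / \<mu>"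
definition "eta_W0 = (lip_W + 1) / \<mu>"

definition "iterate_bound2 = (lag_max / lam1)^2 + 2 * lag_max / \<delta>1 + 2 * lag_max / \<delta>2 + 2 * lag_max / lam2
  + 8 * lag_max / \<rho>1 + 8 * lag_max / \<rho>2 + 8 * \<rho>1 * lag_max + 8 * \<rho>2 * lag_max"
(* Also large enough to contain the explicit point of statset_witness. *)
definition "radius = sqrt iterate_bound2 + (1 + \<rho>1) * norm H + (1 + \<rho>2) * norm Y + 1"

lemma dual_init_nonneg: "0 \<le> dual_init"
  using pos unfolding dual_init_def by simp

lemma lag_init_plus_dual_init_nonneg: "0 \<le> lag_init + dual_init"
proof -
  have "lam1 * norm U0 + \<delta>1/2 * (norm Q0)^2 + \<delta>2/2 * (norm W0)^2 + lam2/2 * (norm Om0)^2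
      + \<rho>1/2 * (norm E10)^2 + \<rho>2/2 * (norm E20)^2 - (norm Z10)^2 / (2 * \<mu>) - (norm Z20)^2 / (2 * \<mu>)
    \<le> lag_init"
    unfolding lag_init_def using pos by (intro Lag_lower_bound) auto
  moreover have "0 \<le> lam1 * norm U0 + \<delta>1/2 * (norm Q0)^2 + \<delta>2/2 * (norm W0)^2 + lam2/2 * (norm Om0)^2
      + \<rho>1/2 * (norm E10)^2 + \<rho>2/2 * (norm E20)^2"
    using pos by simp
  ultimately show ?thesis
    unfolding dual_init_def add_divide_distrib by linarith
qed

lemma lag_init_le_max: "lag_init \<le> lag_max"
  unfolding lag_max_def using pos lag_init_plus_dual_init_nonneg by simp

lemma lag_max_nonneg: "0 \<le> lag_max"
proof -
  have "4 * dual_init \<le> 2 * ((norm Z10)^2 + (norm Z20)^2) / \<mu>"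
    using pos unfolding dual_init_def by (simp add: field_simps)
  moreover have "0 \<le> 4 * (\<rho>1 + \<rho>2) * (lag_init + dual_init) / \<mu>"
    using pos lag_init_plus_dual_init_nonneg by simp
  ultimately show ?thesis
    using lag_init_plus_dual_init_nonneg dual_init_nonneg unfolding lag_max_def add_divide_distrib by linarith
qed

lemma bounds_nonneg: "0 \<le> block_bound" "0 \<le> bound_U" "0 \<le> bound_Q2" "0 \<le> bound_W2"
proof -
  show bb: "0 \<le> block_bound"
    unfolding block_bound_def using lag_max_nonneg dual_init_nonneg by simp
  then show "0 \<le> bound_U" "0 \<le> bound_Q2" "0 \<le> bound_W2"
    unfolding bound_U_def bound_Q2_def bound_W2_def using pos by simp_all
qed

lemma eta_pos: "0 < eta_U0" "0 < eta_Q0" "0 < eta_W0"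
proof -
  have "0 \<le> lip_U" "0 \<le> lip_Q" "0 \<le> lip_W"
    unfolding lip_U_def lip_Q_def lip_W_def using bounds_nonneg pos by simp_all
  then show "0 < eta_U0" "0 < eta_Q0" "0 < eta_W0"
    unfolding eta_U0_def eta_Q0_def eta_W0_def using pos by simp_all
qed

lemma radius_gt: "(1 + \<rho>1) * norm H + (1 + \<rho>2) * norm Y < radius"
proof -
  have "0 \<le> iterate_bound2"
    unfolding iterate_bound2_def using lag_max_nonneg pos by simp
  then have "0 \<le> sqrt iterate_bound2" by simp
  then show ?thesis unfolding radius_def by linarith
qed

lemma radius_pos: "0 < radius"
proof -
  have "0 \<le> (1 + \<rho>1) * norm H" "0 \<le> (1 + \<rho>2) * norm Y"
    using pos by simp_all
  with radius_gt show ?thesis by linarith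
qed

lemma rho_le_mu: "4 * \<rho>1 \<le> 3 * \<mu>" "4 * \<rho>2 \<le> 3 * \<mu>" "\<rho>1^2 \<le> \<mu>^2 / 2" "\<rho>2^2 \<le> \<mu>^2 / 2"
proof -
  have sqrt2: "4/3 \<le> sqrt 2" by (rule real_le_rsqrt) (simp add: power2_eq_square)
  have "sqrt 2 * \<rho>1 \<le> \<mu>" "sqrt 2 * \<rho>2 \<le> \<mu>"
    using mu_ge
    by (meson max.cobounded1 max.cobounded2 mult_left_mono order_trans real_sqrt_ge_zero zero_le_numeral)+
  moreover have "4/3 * \<rho>1 \<le> sqrt 2 * \<rho>1" "4/3 * \<rho>2 \<le> sqrt 2 * \<rho>2"
    using sqrt2 pos by (simp_all add: mult_right_mono)
  ultimately show "4 * \<rho>1 \<le> 3 * \<mu>" "4 * \<rho>2 \<le> 3 * \<mu>" by linarith+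
  from \<open>sqrt 2 * \<rho>1 \<le> \<mu>\<close> have "(sqrt 2 * \<rho>1)^2 \<le> \<mu>^2" using pos by (intro power_mono) auto
  then show "\<rho>1^2 \<le> \<mu>^2 / 2" by (simp add: power_mult_distrib)
  from \<open>sqrt 2 * \<rho>2 \<le> \<mu>\<close> have "(sqrt 2 * \<rho>2)^2 \<le> \<mu>^2" using pos by (intro power_mono) auto
  then show "\<rho>2^2 \<le> \<mu>^2 / 2" by (simp add: power_mult_distrib)
qed

lemma Lag_coupled_lower_bound:
  assumes "Z1 = \<rho>1 *\<^sub>R e1" "Z2 = \<rho>2 *\<^sub>R e2"
  shows "lam1 * norm U + \<delta>1/2 * (norm Q)^2 + \<delta>2/2 * (norm W)^2 + lam2/2 * (norm Om)^2
      + \<rho>1/8 * (norm e1)^2 + \<rho>2/8 * (norm e2)^2 \<le> lag Om U Q W e1 e2 Z1 Z2"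
proof -
  have absorb: "\<rho>/8 * x \<le> \<rho>/2 * x - \<rho>^2 * x / (2 * \<mu>)"
    if "4 * \<rho> \<le> 3 * \<mu>" "0 \<le> x" "0 \<le> \<rho>" for \<rho> x
  proof -
    have "\<rho> * (4 * \<rho>) \<le> \<rho> * (3 * \<mu>)" using that by (intro mult_left_mono)
    then have "\<rho>^2 / (2 * \<mu>) \<le> 3 * \<rho> / 8"
      using pos by (simp add: field_simps power2_eq_square)
    then have "\<rho>^2 / (2 * \<mu>) * x \<le> 3 * \<rho> / 8 * x" using that(2) by (rule mult_right_mono)
    then show ?thesis by simp
  qed
  have Z: "(norm Z1)^2 = \<rho>1^2 * (norm e1)^2" "(norm Z2)^2 = \<rho>2^2 * (norm e2)^2"
    unfolding assms using pos by (simp_all add: power_mult_distrib)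
  have "\<rho>1/8 * (norm e1)^2 \<le> \<rho>1/2 * (norm e1)^2 - (norm Z1)^2 / (2 * \<mu>)"
    unfolding Z(1) by (rule absorb) (use rho_le_mu pos in auto)
  moreover have "\<rho>2/8 * (norm e2)^2 \<le> \<rho>2/2 * (norm e2)^2 - (norm Z2)^2 / (2 * \<mu>)"
    unfolding Z(2) by (rule absorb) (use rho_le_mu pos in auto)
  moreover have "lam1 * norm U + \<delta>1/2 * (norm Q)^2 + \<delta>2/2 * (norm W)^2 + lam2/2 * (norm Om)^2
      + \<rho>1/2 * (norm e1)^2 + \<rho>2/2 * (norm e2)^2 - (norm Z1)^2 / (2 * \<mu>) - (norm Z2)^2 / (2 * \<mu>)
    \<le> lag Om U Q W e1 e2 Z1 Z2"
    using pos by (intro Lag_lower_bound) auto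
  ultimately show ?thesis by linarith
qed

lemma block_bounds:
  assumes lag: "lag Om U Q W e1 e2 Z1 Z2 \<le> lag_max"
    and mult: "(Z1 = Z10 \<and> Z2 = Z20) \<or> (Z1 = \<rho>1 *\<^sub>R e1 \<and> Z2 = \<rho>2 *\<^sub>R e2)"
  shows "norm U \<le> bound_U" "(norm Q)^2 \<le> bound_Q2" "(norm W)^2 \<le> bound_W2"
proof -
  have nonneg: "0 \<le> lam1 * norm U" "0 \<le> \<delta>1/2 * (norm Q)^2" "0 \<le> \<delta>2/2 * (norm W)^2"
    "0 \<le> lam2/2 * (norm Om)^2" "0 \<le> \<rho>1/8 * (norm e1)^2" "0 \<le> \<rho>2/8 * (norm e2)^2"
    using pos by auto
  have "lam1 * norm U + \<delta>1/2 * (norm Q)^2 + \<delta>2/2 * (norm W)^2 \<le> block_bound"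
    using mult
  proof
    assume "Z1 = Z10 \<and> Z2 = Z20"
    then have "(norm Z1)^2 / (2 * \<mu>) + (norm Z2)^2 / (2 * \<mu>) = dual_init"
      unfolding dual_init_def by (simp add: add_divide_distrib)
    moreover have "lam1 * norm U + \<delta>1/2 * (norm Q)^2 + \<delta>2/2 * (norm W)^2 + lam2/2 * (norm Om)^2
        + \<rho>1/2 * (norm e1)^2 + \<rho>2/2 * (norm e2)^2 - (norm Z1)^2 / (2 * \<mu>) - (norm Z2)^2 / (2 * \<mu>)
      \<le> lag Om U Q W e1 e2 Z1 Z2"
      using pos by (intro Lag_lower_bound) auto
    ultimately show ?thesis
      using lag nonneg unfolding block_bound_def by linarith
  next
    assume "Z1 = \<rho>1 *\<^sub>R e1 \<and> Z2 = \<rho>2 *\<^sub>R e2"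
    then show ?thesis
      using Lag_coupled_lower_bound[of Z1 e1 Z2 e2 U Q W Om] lag nonneg dual_init_nonneg
      unfolding block_bound_def by linarith
  qed
  then have "lam1 * norm U \<le> block_bound" "\<delta>1/2 * (norm Q)^2 \<le> block_bound" "\<delta>2/2 * (norm W)^2 \<le> block_bound"
    using nonneg by linarith+
  then show "norm U \<le> bound_U" "(norm Q)^2 \<le> bound_Q2" "(norm W)^2 \<le> bound_W2"
    unfolding bound_U_def bound_Q2_def bound_W2_def using pos by (simp_all add: field_simps)
qed

lemma coupled_iterate_bound:
  assumes lag: "lag Om U Q W e1 e2 Z1 Z2 \<le> lag_max" and Z: "Z1 = \<rho>1 *\<^sub>R e1" "Z2 = \<rho>2 *\<^sub>R e2"
  shows "norm (Om, U, Q, W, e1, e2, Z1, Z2) \<le> sqrt iterate_bound2"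
proof -
  have "0 \<le> lam1 * norm U" "0 \<le> \<delta>1/2 * (norm Q)^2" "0 \<le> \<delta>2/2 * (norm W)^2" "0 \<le> lam2/2 * (norm Om)^2"
    "0 \<le> \<rho>1/8 * (norm e1)^2" "0 \<le> \<rho>2/8 * (norm e2)^2"
    using pos by auto
  then have "lam1 * norm U \<le> lag_max" "\<delta>1/2 * (norm Q)^2 \<le> lag_max" "\<delta>2/2 * (norm W)^2 \<le> lag_max"
    "lam2/2 * (norm Om)^2 \<le> lag_max" "\<rho>1/8 * (norm e1)^2 \<le> lag_max" "\<rho>2/8 * (norm e2)^2 \<le> lag_max"
    using Lag_coupled_lower_bound[OF Z, of U Q W Om] lag by linarith+
  then have "norm U \<le> lag_max / lam1" "(norm Q)^2 \<le> 2 * lag_max / \<delta>1" "(norm W)^2 \<le> 2 * lag_max / \<delta>2"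
    "(norm Om)^2 \<le> 2 * lag_max / lam2" "(norm e1)^2 \<le> 8 * lag_max / \<rho>1" "(norm e2)^2 \<le> 8 * lag_max / \<rho>2"
    using pos by (simp_all add: field_simps)
  moreover from this(5,6) have "(norm Z1)^2 \<le> 8 * \<rho>1 * lag_max" "(norm Z2)^2 \<le> 8 * \<rho>2 * lag_max"
    using Z pos by (simp_all add: power_mult_distrib field_simps power2_eq_square)
  moreover have "(norm U)^2 \<le> (lag_max / lam1)^2"
    using calculation(1) by (intro power_mono) auto
  ultimately have "(norm (Om, U, Q, W, e1, e2, Z1, Z2))^2 \<le> iterate_bound2"
    unfolding iterate_bound2_def by (simp add: norm_Pair)
  then show ?thesis by (rule real_le_rsqrt)
qed

end

section \<open>Descent of the Lagrangian along the iteration\<close>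

locale ladm_iteration = ladm X H Y lam1 lam2 \<rho>1 \<rho>2 \<delta>1 \<delta>2 \<mu> Om0 U0 Q0 W0 E10 E20 Z10 Z20
  for X :: "real^'n^'m" and H :: "real^'n^'s" and Y :: "real^'n^'c"
    and lam1 lam2 \<rho>1 \<rho>2 \<delta>1 \<delta>2 \<mu> :: real
    and Om0 :: "real^'m^'r" and U0 :: "real^'n^'r" and Q0 :: "real^'r^'s" and W0 :: "real^'s^'c"
    and E10 :: "real^'n^'s" and E20 :: "real^'n^'c" and Z10 :: "real^'n^'s" and Z20 :: "real^'n^'c" +
  fixes \<eta>U \<eta>Q \<eta>W :: real
    and Om :: "nat \<Rightarrow> real^'m^'r" and U :: "nat \<Rightarrow> real^'n^'r" and Q :: "nat \<Rightarrow> real^'r^'s"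
    and W :: "nat \<Rightarrow> real^'s^'c" and E1 :: "nat \<Rightarrow> real^'n^'s" and E2 :: "nat \<Rightarrow> real^'n^'c"
    and Z1 :: "nat \<Rightarrow> real^'n^'s" and Z2 :: "nat \<Rightarrow> real^'n^'c"
  assumes eta: "\<eta>U > eta_U0" "\<eta>Q > eta_Q0" "\<eta>W > eta_W0"
    and init: "Om 0 = Om0" "U 0 = U0" "Q 0 = Q0" "W 0 = W0"
       "E1 0 = E10" "E2 0 = E20" "Z1 0 = Z10" "Z2 0 = Z20"
    and iteration: "\<And>k. U (Suc k) = soft_mat (lam1 / (\<mu> * \<eta>U))
            (U k - (1 / (\<mu> * \<eta>U)) *\<^sub>R
               grad (\<lambda>V. Ls X H Y \<rho>1 \<rho>2 \<delta>1 \<delta>2 lam2 \<mu>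
                        (Om k) V (Q k) (W k) (E1 k) (E2 k) (Z1 k) (Z2 k)) (U k))
        \<and> Q (Suc k) = Q k - (1 / (\<mu> * \<eta>Q)) *\<^sub>R
               grad (\<lambda>V. Lag X H Y lam1 \<rho>1 \<rho>2 \<delta>1 \<delta>2 lam2 \<mu>
                        (Om k) (U (Suc k)) V (W k) (E1 k) (E2 k) (Z1 k) (Z2 k)) (Q k)
        \<and> W (Suc k) = W k - (1 / (\<mu> * \<eta>W)) *\<^sub>R
               grad (\<lambda>V. Lag X H Y lam1 \<rho>1 \<rho>2 \<delta>1 \<delta>2 lam2 \<mu>
                        (Om k) (U (Suc k)) (Q (Suc k)) V (E1 k) (E2 k) (Z1 k) (Z2 k)) (W k)
        \<and> (\<forall>V. Lag X H Y lam1 \<rho>1 \<rho>2 \<delta>1 \<delta>2 lam2 \<mu>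
                  (Om (Suc k)) (U (Suc k)) (Q (Suc k)) (W (Suc k)) (E1 k) (E2 k) (Z1 k) (Z2 k)
                \<le> Lag X H Y lam1 \<rho>1 \<rho>2 \<delta>1 \<delta>2 lam2 \<mu>
                  V (U (Suc k)) (Q (Suc k)) (W (Suc k)) (E1 k) (E2 k) (Z1 k) (Z2 k))
        \<and> (\<forall>V. Lag X H Y lam1 \<rho>1 \<rho>2 \<delta>1 \<delta>2 lam2 \<mu>
                  (Om (Suc k)) (U (Suc k)) (Q (Suc k)) (W (Suc k)) (E1 (Suc k)) (E2 k) (Z1 k) (Z2 k)
                \<le> Lag X H Y lam1 \<rho>1 \<rho>2 \<delta>1 \<delta>2 lam2 \<mu>
                  (Om (Suc k)) (U (Suc k)) (Q (Suc k)) (W (Suc k)) V (E2 k) (Z1 k) (Z2 k))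
        \<and> (\<forall>V. Lag X H Y lam1 \<rho>1 \<rho>2 \<delta>1 \<delta>2 lam2 \<mu>
                  (Om (Suc k)) (U (Suc k)) (Q (Suc k)) (W (Suc k)) (E1 (Suc k)) (E2 (Suc k)) (Z1 k) (Z2 k)
                \<le> Lag X H Y lam1 \<rho>1 \<rho>2 \<delta>1 \<delta>2 lam2 \<mu>
                  (Om (Suc k)) (U (Suc k)) (Q (Suc k)) (W (Suc k)) (E1 (Suc k)) V (Z1 k) (Z2 k))
        \<and> Z1 (Suc k) = Z1 k + \<mu> *\<^sub>R (H - Q (Suc k) ** U (Suc k) - E1 (Suc k))
        \<and> Z2 (Suc k) = Z2 k + \<mu> *\<^sub>R (Y - (W (Suc k) ** Q (Suc k)) ** U (Suc k) - E2 (Suc k))"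
begin

abbreviation "iterate k \<equiv> (Om k, U k, Q k, W k, E1 k, E2 k, Z1 k, Z2 k)"
abbreviation "lag_at k \<equiv> lag (Om k) (U k) (Q k) (W k) (E1 k) (E2 k) (Z1 k) (Z2 k)"

definition "step_grad_U k = Ls_grad_U X H Y \<mu> (Om k) (U k) (Q k) (W k) (E1 k) (E2 k) (Z1 k) (Z2 k)"
definition "step_grad_Q k = Ls_grad_Q H Y \<delta>1 \<mu> (U (Suc k)) (Q k) (W k) (E1 k) (E2 k) (Z1 k) (Z2 k)"
definition "step_grad_W k = Ls_grad_W Y \<delta>2 \<mu> (U (Suc k)) (Q (Suc k)) (W k) (E2 k) (Z2 k)"

lemma step_sizes: "lip_U + 1 \<le> \<mu> * \<eta>U" "lip_Q + 1 \<le> \<mu> * \<eta>Q" "lip_W + 1 \<le> \<mu> * \<eta>W"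
  using eta pos(7) unfolding eta_U0_def eta_Q0_def eta_W0_def by (simp_all add: field_simps)

lemma step_sizes_pos: "0 < \<mu> * \<eta>U" "0 < \<mu> * \<eta>Q" "0 < \<mu> * \<eta>W"
  using eta eta_pos pos(7) by simp_all

lemma U_step: "U (Suc k) = soft_mat (lam1 / (\<mu> * \<eta>U)) (U k - (1 / (\<mu> * \<eta>U)) *\<^sub>R step_grad_U k)"
  using iteration[of k] unfolding step_grad_U_def grad_eqI[OF has_derivative_Ls_U] by blast

lemma Q_step: "Q (Suc k) = Q k - (1 / (\<mu> * \<eta>Q)) *\<^sub>R step_grad_Q k"
  using iteration[of k] unfolding step_grad_Q_def grad_eqI[OF has_derivative_Lag_Q] by blast

lemma W_step: "W (Suc k) = W k - (1 / (\<mu> * \<eta>W)) *\<^sub>R step_grad_W k"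
  using iteration[of k] unfolding step_grad_W_def grad_eqI[OF has_derivative_Lag_W] by blast

lemma Om_optimal: "Ls_grad_Om X lam2 (Om (Suc k)) (U (Suc k)) = 0"
  by (rule has_derivative_zero_at_minimum[OF has_derivative_Lag_Om]) (use iteration[of k] in blast)

lemma E1_optimal: "\<rho>1 *\<^sub>R E1 (Suc k) - Z1 k - \<mu> *\<^sub>R (H - Q (Suc k) ** U (Suc k) - E1 (Suc k)) = 0"
  by (rule has_derivative_zero_at_minimum[OF has_derivative_Lag_e1]) (use iteration[of k] in blast)

lemma E2_optimal:
  "\<rho>2 *\<^sub>R E2 (Suc k) - Z2 k - \<mu> *\<^sub>R (Y - (W (Suc k) ** Q (Suc k)) ** U (Suc k) - E2 (Suc k)) = 0"
  by (rule has_derivative_zero_at_minimum[OF has_derivative_Lag_e2]) (use iteration[of k] in blast)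

lemma Z1_step: "Z1 (Suc k) = Z1 k + \<mu> *\<^sub>R (H - Q (Suc k) ** U (Suc k) - E1 (Suc k))"
  using iteration[of k] by blast

lemma Z2_step: "Z2 (Suc k) = Z2 k + \<mu> *\<^sub>R (Y - (W (Suc k) ** Q (Suc k)) ** U (Suc k) - E2 (Suc k))"
  using iteration[of k] by blast

(* Optimality of the eps-steps combined with the multiplier update. *)
lemma Z_coupled: "Z1 (Suc k) = \<rho>1 *\<^sub>R E1 (Suc k)" "Z2 (Suc k) = \<rho>2 *\<^sub>R E2 (Suc k)"
  using Z1_step[of k] E1_optimal[of k] Z2_step[of k] E2_optimal[of k]
  by (metis diff_diff_eq right_minus_eq)+

lemma descent_U:
  assumes "(norm (Q k))^2 \<le> bound_Q2" "(norm (W k))^2 \<le> bound_W2"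
  shows "lag (Om k) (U (Suc k)) (Q k) (W k) (E1 k) (E2 k) (Z1 k) (Z2 k) + 1/2 * (norm (U (Suc k) - U k))^2
    \<le> lag_at k"
proof -
  let ?f = "\<lambda>V. ls (Om k) V (Q k) (W k) (E1 k) (E2 k) (Z1 k) (Z2 k)"
  let ?h = "U (Suc k) - U k"
  have "?f (U (Suc k)) \<le> ?f (U k) + step_grad_U k \<bullet> ?h
      + (1 + \<mu> * (norm (Q k))^2 + \<mu> * (norm (W k))^2 * (norm (Q k))^2) / 2 * (norm ?h)^2"
    using Ls_smooth_U[of \<mu> X H Y \<rho>1 \<rho>2 \<delta>1 \<delta>2 lam2 "Om k" "U k" ?h "Q k" "W k" "E1 k" "E2 k" "Z1 k" "Z2 k"] pos(7)
    unfolding step_grad_U_def by simp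
  also have "\<dots> \<le> ?f (U k) + step_grad_U k \<bullet> ?h + lip_U / 2 * (norm ?h)^2"
    unfolding lip_U_def using assms pos bounds_nonneg
    by (intro add_left_mono mult_right_mono divide_right_mono add_mono mult_left_mono mult_mono) auto
  finally have "?f (U (Suc k)) \<le> ?f (U k) + step_grad_U k \<bullet> ?h + lip_U / 2 * (norm ?h)^2" .
  moreover have "lam1 * l1norm (U (Suc k)) + step_grad_U k \<bullet> (U (Suc k) - U k)
      + (\<mu> * \<eta>U)/2 * (norm (U (Suc k) - U k))^2 \<le> lam1 * l1norm (U k)"
    using soft_mat_linearized_prox[OF step_sizes_pos(1), of lam1 "U k" "step_grad_U k" "U k"] pos(1)
    unfolding U_step[symmetric] by simp
  ultimately show ?thesis
    using linearized_step_descent[of ?f, OF _ _ step_sizes(1)] unfolding Lag_def by simp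
qed

lemma descent_Q:
  assumes "norm (U (Suc k)) \<le> bound_U" "(norm (W k))^2 \<le> bound_W2"
  shows "lag (Om k) (U (Suc k)) (Q (Suc k)) (W k) (E1 k) (E2 k) (Z1 k) (Z2 k) + 1/2 * (norm (Q (Suc k) - Q k))^2
    \<le> lag (Om k) (U (Suc k)) (Q k) (W k) (E1 k) (E2 k) (Z1 k) (Z2 k)"
proof -
  let ?f = "\<lambda>V. ls (Om k) (U (Suc k)) V (W k) (E1 k) (E2 k) (Z1 k) (Z2 k)"
  let ?h = "Q (Suc k) - Q k"
  have U2: "(norm (U (Suc k)))^2 \<le> bound_U^2" using assms(1) by (intro power_mono) auto
  have "?f (Q (Suc k)) \<le> ?f (Q k) + step_grad_Q k \<bullet> ?h
      + (\<mu> * (norm (U (Suc k)))^2 + \<mu> * (norm (W k))^2 * (norm (U (Suc k)))^2 + \<delta>1) / 2 * (norm ?h)^2"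
    using Ls_smooth_Q[of \<mu> X H Y \<rho>1 \<rho>2 \<delta>1 \<delta>2 lam2 "Om k" "U (Suc k)" "Q k" ?h "W k" "E1 k" "E2 k" "Z1 k" "Z2 k"]
      pos(7) unfolding step_grad_Q_def by simp
  also have "\<dots> \<le> ?f (Q k) + step_grad_Q k \<bullet> ?h + lip_Q / 2 * (norm ?h)^2"
    unfolding lip_Q_def using assms U2 pos bounds_nonneg
    by (intro add_left_mono mult_right_mono divide_right_mono add_mono mult_left_mono mult_mono) auto
  finally have "?f (Q (Suc k)) \<le> ?f (Q k) + step_grad_Q k \<bullet> ?h + lip_Q / 2 * (norm ?h)^2" .
  moreover have "0 + step_grad_Q k \<bullet> ?h + (\<mu> * \<eta>Q)/2 * (norm ?h)^2 \<le> 0"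
    using gradient_step_linearization[OF Q_step step_sizes_pos(2)] by simp
  ultimately show ?thesis
    using linearized_step_descent[of ?f _ _ _ _ "\<lambda>_. 0", OF _ _ step_sizes(2)] unfolding Lag_def by simp
qed

lemma descent_W:
  assumes "norm (U (Suc k)) \<le> bound_U" "(norm (Q (Suc k)))^2 \<le> bound_Q2"
  shows "lag (Om k) (U (Suc k)) (Q (Suc k)) (W (Suc k)) (E1 k) (E2 k) (Z1 k) (Z2 k) + 1/2 * (norm (W (Suc k) - W k))^2
    \<le> lag (Om k) (U (Suc k)) (Q (Suc k)) (W k) (E1 k) (E2 k) (Z1 k) (Z2 k)"
proof -
  let ?f = "\<lambda>V. ls (Om k) (U (Suc k)) (Q (Suc k)) V (E1 k) (E2 k) (Z1 k) (Z2 k)"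
  let ?h = "W (Suc k) - W k"
  have U2: "(norm (U (Suc k)))^2 \<le> bound_U^2" using assms(1) by (intro power_mono) auto
  have "?f (W (Suc k)) \<le> ?f (W k) + step_grad_W k \<bullet> ?h
      + (\<mu> * (norm (Q (Suc k)))^2 * (norm (U (Suc k)))^2 + \<delta>2) / 2 * (norm ?h)^2"
    using Ls_smooth_W[of \<mu> X H Y \<rho>1 \<rho>2 \<delta>1 \<delta>2 lam2 "Om k" "U (Suc k)" "Q (Suc k)" "W k" ?h "E1 k" "E2 k" "Z1 k" "Z2 k"]
      pos(7) unfolding step_grad_W_def by simp
  also have "\<dots> \<le> ?f (W k) + step_grad_W k \<bullet> ?h + lip_W / 2 * (norm ?h)^2"
    unfolding lip_W_def using assms U2 pos bounds_nonneg
    by (intro add_left_mono mult_right_mono divide_right_mono add_mono mult_left_mono mult_mono) auto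
  finally have "?f (W (Suc k)) \<le> ?f (W k) + step_grad_W k \<bullet> ?h + lip_W / 2 * (norm ?h)^2" .
  moreover have "0 + step_grad_W k \<bullet> ?h + (\<mu> * \<eta>W)/2 * (norm ?h)^2 \<le> 0"
    using gradient_step_linearization[OF W_step step_sizes_pos(3)] by simp
  ultimately show ?thesis
    using linearized_step_descent[of ?f _ _ _ _ "\<lambda>_. 0", OF _ _ step_sizes(3)] unfolding Lag_def by simp
qed

lemma descent_Om:
  "lag (Om (Suc k)) (U (Suc k)) (Q (Suc k)) (W (Suc k)) (E1 k) (E2 k) (Z1 k) (Z2 k)
      + lam2/2 * (norm (Om (Suc k) - Om k))^2
    \<le> lag (Om k) (U (Suc k)) (Q (Suc k)) (W (Suc k)) (E1 k) (E2 k) (Z1 k) (Z2 k)"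
proof -
  let ?h = "Om k - Om (Suc k)"
  have "ls (Om k) (U (Suc k)) (Q (Suc k)) (W (Suc k)) (E1 k) (E2 k) (Z1 k) (Z2 k)
      = ls (Om (Suc k)) (U (Suc k)) (Q (Suc k)) (W (Suc k)) (E1 k) (E2 k) (Z1 k) (Z2 k)
        + (1/2 * (norm (?h ** X))^2 + lam2/2 * (norm (Om (Suc k) - Om k))^2)"
    using Ls_expand_Om[of X H Y \<rho>1 \<rho>2 \<delta>1 \<delta>2 lam2 \<mu> "Om (Suc k)" ?h "U (Suc k)" "Q (Suc k)" "W (Suc k)"
        "E1 k" "E2 k" "Z1 k" "Z2 k"] Om_optimal[of k]
    by (simp add: norm_minus_commute)
  then show ?thesis
    using zero_le_power2[of "norm (?h ** X)"] unfolding Lag_def by linarith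
qed

lemma descent_E1:
  "lag (Om (Suc k)) (U (Suc k)) (Q (Suc k)) (W (Suc k)) (E1 (Suc k)) (E2 k) (Z1 k) (Z2 k)
      + (\<rho>1 + \<mu>)/2 * (norm (E1 (Suc k) - E1 k))^2
    \<le> lag (Om (Suc k)) (U (Suc k)) (Q (Suc k)) (W (Suc k)) (E1 k) (E2 k) (Z1 k) (Z2 k)"
  using Ls_expand_e1[of X H Y \<rho>1 \<rho>2 \<delta>1 \<delta>2 lam2 \<mu> "Om (Suc k)" "U (Suc k)" "Q (Suc k)" "W (Suc k)"
      "E1 (Suc k)" "E1 k - E1 (Suc k)" "E2 k" "Z1 k" "Z2 k"] E1_optimal[of k]
  unfolding Lag_def by (simp add: norm_minus_commute)

lemma descent_E2:
  "lag (Om (Suc k)) (U (Suc k)) (Q (Suc k)) (W (Suc k)) (E1 (Suc k)) (E2 (Suc k)) (Z1 k) (Z2 k)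
      + (\<rho>2 + \<mu>)/2 * (norm (E2 (Suc k) - E2 k))^2
    \<le> lag (Om (Suc k)) (U (Suc k)) (Q (Suc k)) (W (Suc k)) (E1 (Suc k)) (E2 k) (Z1 k) (Z2 k)"
  using Ls_expand_e2[of X H Y \<rho>1 \<rho>2 \<delta>1 \<delta>2 lam2 \<mu> "Om (Suc k)" "U (Suc k)" "Q (Suc k)" "W (Suc k)"
      "E1 (Suc k)" "E2 (Suc k)" "E2 k - E2 (Suc k)" "Z1 k" "Z2 k"] E2_optimal[of k]
  unfolding Lag_def by (simp add: norm_minus_commute)

lemma dual_ascent:
  "lag_at (Suc k) = lag (Om (Suc k)) (U (Suc k)) (Q (Suc k)) (W (Suc k)) (E1 (Suc k)) (E2 (Suc k)) (Z1 k) (Z2 k)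
     + (norm (Z1 (Suc k) - Z1 k))^2 / \<mu> + (norm (Z2 (Suc k) - Z2 k))^2 / \<mu>"
proof -
  have r: "H - Q (Suc k) ** U (Suc k) - E1 (Suc k) = (1/\<mu>) *\<^sub>R (Z1 (Suc k) - Z1 k)"
    "Y - (W (Suc k) ** Q (Suc k)) ** U (Suc k) - E2 (Suc k) = (1/\<mu>) *\<^sub>R (Z2 (Suc k) - Z2 k)"
    using Z1_step[of k] Z2_step[of k] pos(7) by simp_all
  have "ls (Om (Suc k)) (U (Suc k)) (Q (Suc k)) (W (Suc k)) (E1 (Suc k)) (E2 (Suc k)) (Z1 (Suc k)) (Z2 (Suc k))
    = ls (Om (Suc k)) (U (Suc k)) (Q (Suc k)) (W (Suc k)) (E1 (Suc k)) (E2 (Suc k)) (Z1 k) (Z2 k)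
     + (Z1 (Suc k) - Z1 k) \<bullet> (H - Q (Suc k) ** U (Suc k) - E1 (Suc k))
     + (Z2 (Suc k) - Z2 k) \<bullet> (Y - (W (Suc k) ** Q (Suc k)) ** U (Suc k) - E2 (Suc k))"
    by (simp add: Ls_def inner_diff_left)
  then show ?thesis
    unfolding Lag_def r by (simp add: power2_norm_eq_inner divide_inverse mult.commute)
qed

definition "decrement k = 1/2 * (norm (U (Suc k) - U k))^2 + 1/2 * (norm (Q (Suc k) - Q k))^2
  + 1/2 * (norm (W (Suc k) - W k))^2 + lam2/2 * (norm (Om (Suc k) - Om k))^2
  + \<rho>1/2 * (norm (E1 (Suc k) - E1 k))^2 + \<rho>2/2 * (norm (E2 (Suc k) - E2 k))^2"

lemma decrement_nonneg: "0 \<le> decrement k"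
  using pos unfolding decrement_def by simp

(* True at k = 0 and, by Z_coupled, at every later step; it makes lag coercive. *)
abbreviation "multiplier_invariant k \<equiv>
  (Z1 k = Z10 \<and> Z2 k = Z20) \<or> (Z1 k = \<rho>1 *\<^sub>R E1 k \<and> Z2 k = \<rho>2 *\<^sub>R E2 k)"

lemma primal_descent:
  assumes lag: "lag_at k \<le> lag_max" and mult: "multiplier_invariant k"
  shows "lag (Om (Suc k)) (U (Suc k)) (Q (Suc k)) (W (Suc k)) (E1 (Suc k)) (E2 (Suc k)) (Z1 k) (Z2 k)
     + decrement k + \<mu>/2 * (norm (E1 (Suc k) - E1 k))^2 + \<mu>/2 * (norm (E2 (Suc k) - E2 k))^2 \<le> lag_at k"
proof -
  have Q: "(norm (Q k))^2 \<le> bound_Q2" and W: "(norm (W k))^2 \<le> bound_W2"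
    using block_bounds[OF lag mult] by auto
  note dU = descent_U[OF Q W]
  then have "lag (Om k) (U (Suc k)) (Q k) (W k) (E1 k) (E2 k) (Z1 k) (Z2 k) \<le> lag_max"
    using lag zero_le_power2[of "norm (U (Suc k) - U k)"] by linarith
  then have U1: "norm (U (Suc k)) \<le> bound_U" by (rule block_bounds(1)[OF _ mult])
  note dQ = descent_Q[OF U1 W]
  then have "lag (Om k) (U (Suc k)) (Q (Suc k)) (W k) (E1 k) (E2 k) (Z1 k) (Z2 k) \<le> lag_max"
    using dU lag zero_le_power2[of "norm (U (Suc k) - U k)"] zero_le_power2[of "norm (Q (Suc k) - Q k)"]
    by linarith
  then have Q1: "(norm (Q (Suc k)))^2 \<le> bound_Q2" by (rule block_bounds(2)[OF _ mult])
  have "(\<rho>1 + \<mu>)/2 * (norm (E1 (Suc k) - E1 k))^2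
      = \<rho>1/2 * (norm (E1 (Suc k) - E1 k))^2 + \<mu>/2 * (norm (E1 (Suc k) - E1 k))^2"
    "(\<rho>2 + \<mu>)/2 * (norm (E2 (Suc k) - E2 k))^2
      = \<rho>2/2 * (norm (E2 (Suc k) - E2 k))^2 + \<mu>/2 * (norm (E2 (Suc k) - E2 k))^2"
    by (simp_all add: algebra_simps)
  then show ?thesis
    using dU dQ descent_W[OF U1 Q1] descent_Om[of k] descent_E1[of k] descent_E2[of k]
    unfolding decrement_def by linarith
qed

lemma lag_first_iterate_le: "lag_at (Suc 0) \<le> lag_max"
proof -
  define A0 where "A0 = lag_init + dual_init"
  let ?L1 = "lag (Om (Suc 0)) (U (Suc 0)) (Q (Suc 0)) (W (Suc 0)) (E1 (Suc 0)) (E2 (Suc 0)) (Z1 0) (Z2 0)"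
  have start: "lag_at 0 \<le> lag_max" "multiplier_invariant 0"
    using lag_init_le_max init unfolding lag_init_def by simp_all
  have "lag_at 0 = lag_init" using init unfolding lag_init_def by simp
  moreover have "0 \<le> \<mu>/2 * (norm (E1 (Suc 0) - E1 0))^2" "0 \<le> \<mu>/2 * (norm (E2 (Suc 0) - E2 0))^2"
    using pos by simp_all
  ultimately have L1: "?L1 \<le> lag_init"
    using primal_descent[OF start] decrement_nonneg[of 0] by linarith
  moreover have "lam1 * norm (U (Suc 0)) + \<delta>1/2 * (norm (Q (Suc 0)))^2 + \<delta>2/2 * (norm (W (Suc 0)))^2
      + lam2/2 * (norm (Om (Suc 0)))^2 + \<rho>1/2 * (norm (E1 (Suc 0)))^2 + \<rho>2/2 * (norm (E2 (Suc 0)))^2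
      - (norm (Z1 0))^2 / (2 * \<mu>) - (norm (Z2 0))^2 / (2 * \<mu>) \<le> ?L1"
    using pos by (intro Lag_lower_bound) auto
  moreover have "(norm (Z1 0))^2 / (2 * \<mu>) + (norm (Z2 0))^2 / (2 * \<mu>) = dual_init"
    unfolding dual_init_def init by (simp add: add_divide_distrib)
  moreover have "0 \<le> lam1 * norm (U (Suc 0)) + \<delta>1/2 * (norm (Q (Suc 0)))^2 + \<delta>2/2 * (norm (W (Suc 0)))^2
      + lam2/2 * (norm (Om (Suc 0)))^2" "0 \<le> \<rho>1/2 * (norm (E1 (Suc 0)))^2" "0 \<le> \<rho>2/2 * (norm (E2 (Suc 0)))^2"
    using pos by simp_all
  ultimately have "\<rho>1/2 * (norm (E1 (Suc 0)))^2 \<le> A0" "\<rho>2/2 * (norm (E2 (Suc 0)))^2 \<le> A0"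
    unfolding A0_def by linarith+
  then have "(norm (Z1 (Suc 0)))^2 \<le> 2 * \<rho>1 * A0" "(norm (Z2 (Suc 0)))^2 \<le> 2 * \<rho>2 * A0"
    using Z_coupled[of 0] pos by (simp_all add: power_mult_distrib power2_eq_square field_simps)
  then have "(norm (Z1 (Suc 0) - Z1 0))^2 + (norm (Z2 (Suc 0) - Z2 0))^2
      \<le> 4 * (\<rho>1 + \<rho>2) * A0 + 2 * ((norm Z10)^2 + (norm Z20)^2)"
    unfolding init(7,8) using power2_norm_diff_le[of "Z1 (Suc 0)" Z10] power2_norm_diff_le[of "Z2 (Suc 0)" Z20]
      distrib_left[of "4 * A0" \<rho>1 \<rho>2] by (simp add: algebra_simps)
  then have "(norm (Z1 (Suc 0) - Z1 0))^2 / \<mu> + (norm (Z2 (Suc 0) - Z2 0))^2 / \<mu>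
      \<le> (4 * (\<rho>1 + \<rho>2) * A0 + 2 * ((norm Z10)^2 + (norm Z20)^2)) / \<mu>"
    using pos(7) by (simp add: divide_right_mono flip: add_divide_distrib)
  with L1 show ?thesis
    using dual_ascent[of 0] unfolding lag_max_def A0_def by simp
qed

lemma coupled_dual_step:
  "(norm (Z1 (Suc (Suc k)) - Z1 (Suc k)))^2 = \<rho>1^2 * (norm (E1 (Suc (Suc k)) - E1 (Suc k)))^2"
  "(norm (Z2 (Suc (Suc k)) - Z2 (Suc k)))^2 = \<rho>2^2 * (norm (E2 (Suc (Suc k)) - E2 (Suc k)))^2"
  using pos by (simp_all add: Z_coupled power_mult_distrib flip: scaleR_diff_right)

(* The dual ascent (rho^2/mu) |Delta eps|^2 is absorbed by the mu-part of the eps-descent;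
   this is where mu >= sqrt 2 * max rho1 rho2 is used. *)
lemma lag_sufficient_decrease:
  assumes "lag_at (Suc k) \<le> lag_max"
  shows "lag_at (Suc (Suc k)) + decrement (Suc k) \<le> lag_at (Suc k)"
proof -
  have "\<rho>^2 * x / \<mu> \<le> \<mu>/2 * x" if "\<rho>^2 \<le> \<mu>^2 / 2" "0 \<le> x" for \<rho> x
  proof -
    have "\<rho>^2 * x \<le> \<mu>^2 / 2 * x" using that by (rule mult_right_mono)
    then show ?thesis using pos(7) by (simp add: field_simps power2_eq_square)
  qed
  then have "(norm (Z1 (Suc (Suc k)) - Z1 (Suc k)))^2 / \<mu> \<le> \<mu>/2 * (norm (E1 (Suc (Suc k)) - E1 (Suc k)))^2"
    "(norm (Z2 (Suc (Suc k)) - Z2 (Suc k)))^2 / \<mu> \<le> \<mu>/2 * (norm (E2 (Suc (Suc k)) - E2 (Suc k)))^2"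
    unfolding coupled_dual_step using rho_le_mu by simp_all
  then show ?thesis
    using primal_descent[OF assms] Z_coupled[of k] dual_ascent[of "Suc k"] by linarith
qed

lemma lag_Suc_le_max: "lag_at (Suc k) \<le> lag_max"
proof (induction k)
  case 0
  show ?case by (rule lag_first_iterate_le)
next
  case (Suc k)
  then show ?case using lag_sufficient_decrease[OF Suc.IH] decrement_nonneg[of "Suc k"] by linarith
qed

lemma lag_nonneg: "0 \<le> lag_at (Suc k)"
proof -
  have "0 \<le> lam1 * norm (U (Suc k)) + \<delta>1/2 * (norm (Q (Suc k)))^2 + \<delta>2/2 * (norm (W (Suc k)))^2
      + lam2/2 * (norm (Om (Suc k)))^2 + \<rho>1/8 * (norm (E1 (Suc k)))^2 + \<rho>2/8 * (norm (E2 (Suc k)))^2"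
    using pos by simp
  then show ?thesis using Lag_coupled_lower_bound[OF Z_coupled] by (rule order_trans)
qed

lemma decrement_tendsto_zero: "(\<lambda>k. decrement (Suc k)) \<longlonglongrightarrow> 0"
  by (rule sufficient_decrease_tendsto_zero[of "\<lambda>k. lag_at (Suc k)" _ 0])
     (use lag_sufficient_decrease lag_Suc_le_max decrement_nonneg lag_nonneg in auto)

lemma power2_step_le_decrement:
  "(norm (U (Suc (Suc k)) - U (Suc k)))^2 \<le> 2 * decrement (Suc k)"
  "(norm (Q (Suc (Suc k)) - Q (Suc k)))^2 \<le> 2 * decrement (Suc k)"
  "(norm (W (Suc (Suc k)) - W (Suc k)))^2 \<le> 2 * decrement (Suc k)"
  "(norm (Om (Suc (Suc k)) - Om (Suc k)))^2 \<le> 2 / lam2 * decrement (Suc k)"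
  "(norm (E1 (Suc (Suc k)) - E1 (Suc k)))^2 \<le> 2 / \<rho>1 * decrement (Suc k)"
  "(norm (E2 (Suc (Suc k)) - E2 (Suc k)))^2 \<le> 2 / \<rho>2 * decrement (Suc k)"
  "(norm (Z1 (Suc (Suc k)) - Z1 (Suc k)))^2 \<le> 2 * \<rho>1 * decrement (Suc k)"
  "(norm (Z2 (Suc (Suc k)) - Z2 (Suc k)))^2 \<le> 2 * \<rho>2 * decrement (Suc k)"
proof -
  let ?d = "decrement (Suc k)"
  have nonneg: "0 \<le> lam2/2 * (norm (Om (Suc (Suc k)) - Om (Suc k)))^2"
    "0 \<le> \<rho>1/2 * (norm (E1 (Suc (Suc k)) - E1 (Suc k)))^2" "0 \<le> \<rho>2/2 * (norm (E2 (Suc (Suc k)) - E2 (Suc k)))^2"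
    using pos by simp_all
  then have parts: "(norm (U (Suc (Suc k)) - U (Suc k)))^2 \<le> 2 * ?d"
    "(norm (Q (Suc (Suc k)) - Q (Suc k)))^2 \<le> 2 * ?d" "(norm (W (Suc (Suc k)) - W (Suc k)))^2 \<le> 2 * ?d"
    "lam2/2 * (norm (Om (Suc (Suc k)) - Om (Suc k)))^2 \<le> ?d"
    "\<rho>1/2 * (norm (E1 (Suc (Suc k)) - E1 (Suc k)))^2 \<le> ?d" "\<rho>2/2 * (norm (E2 (Suc (Suc k)) - E2 (Suc k)))^2 \<le> ?d"
    unfolding decrement_def by (simp_all add: add_nonneg_nonneg)
  then show "(norm (U (Suc (Suc k)) - U (Suc k)))^2 \<le> 2 * ?d" "(norm (Q (Suc (Suc k)) - Q (Suc k)))^2 \<le> 2 * ?d"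
    "(norm (W (Suc (Suc k)) - W (Suc k)))^2 \<le> 2 * ?d"
    by simp_all
  show E1: "(norm (E1 (Suc (Suc k)) - E1 (Suc k)))^2 \<le> 2 / \<rho>1 * ?d"
    and E2: "(norm (E2 (Suc (Suc k)) - E2 (Suc k)))^2 \<le> 2 / \<rho>2 * ?d"
    and "(norm (Om (Suc (Suc k)) - Om (Suc k)))^2 \<le> 2 / lam2 * ?d"
    using parts(4-6) pos by (simp_all add: field_simps)
  show "(norm (Z1 (Suc (Suc k)) - Z1 (Suc k)))^2 \<le> 2 * \<rho>1 * ?d"
    "(norm (Z2 (Suc (Suc k)) - Z2 (Suc k)))^2 \<le> 2 * \<rho>2 * ?d"
    unfolding coupled_dual_step using parts(5,6) pos by (simp_all add: field_simps power2_eq_square)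
qed

lemma iterate_step_tendsto_zero: "(\<lambda>k. iterate (Suc k) - iterate k) \<longlonglongrightarrow> 0"
proof (rule LIMSEQ_imp_Suc)
  note vanish = tendsto_zero_if_power2_norm_le[OF _ decrement_tendsto_zero]
  show "(\<lambda>k. iterate (Suc (Suc k)) - iterate (Suc k)) \<longlonglongrightarrow> 0"
    using vanish[OF power2_step_le_decrement(1)] vanish[OF power2_step_le_decrement(2)]
      vanish[OF power2_step_le_decrement(3)] vanish[OF power2_step_le_decrement(4)]
      vanish[OF power2_step_le_decrement(5)] vanish[OF power2_step_le_decrement(6)]
      vanish[OF power2_step_le_decrement(7)] vanish[OF power2_step_le_decrement(8)]
    by (simp add: tendsto_Pair_iff zero_prod_def)
qed

section \<open>Limit points\<close>

lemma steps_tendsto_zero: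
  "(\<lambda>k. Q (Suc k) - Q k) \<longlonglongrightarrow> 0" "(\<lambda>k. W (Suc k) - W k) \<longlonglongrightarrow> 0"
  "(\<lambda>k. Z1 (Suc k) - Z1 k) \<longlonglongrightarrow> 0" "(\<lambda>k. Z2 (Suc k) - Z2 k) \<longlonglongrightarrow> 0"
  using iterate_step_tendsto_zero by (simp_all add: tendsto_Pair_iff zero_prod_def)

lemma optimality_residuals_tendsto_zero:
  "step_grad_Q \<longlonglongrightarrow> 0" "step_grad_W \<longlonglongrightarrow> 0"
  "(\<lambda>k. H - Q (Suc k) ** U (Suc k) - E1 (Suc k)) \<longlonglongrightarrow> 0"
  "(\<lambda>k. Y - (W (Suc k) ** Q (Suc k)) ** U (Suc k) - E2 (Suc k)) \<longlonglongrightarrow> 0"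
proof -
  have "\<eta>Q \<noteq> 0" "\<eta>W \<noteq> 0" "\<mu> \<noteq> 0" using step_sizes_pos pos(7) by auto
  then have "step_grad_Q = (\<lambda>k. (- \<mu> * \<eta>Q) *\<^sub>R (Q (Suc k) - Q k))"
    "step_grad_W = (\<lambda>k. (- \<mu> * \<eta>W) *\<^sub>R (W (Suc k) - W k))"
    "(\<lambda>k. H - Q (Suc k) ** U (Suc k) - E1 (Suc k)) = (\<lambda>k. (1 / \<mu>) *\<^sub>R (Z1 (Suc k) - Z1 k))"
    "(\<lambda>k. Y - (W (Suc k) ** Q (Suc k)) ** U (Suc k) - E2 (Suc k)) = (\<lambda>k. (1 / \<mu>) *\<^sub>R (Z2 (Suc k) - Z2 k))"
    by (simp_all add: fun_eq_iff Q_step W_step Z1_step Z2_step)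
  then show "step_grad_Q \<longlonglongrightarrow> 0" "step_grad_W \<longlonglongrightarrow> 0"
    "(\<lambda>k. H - Q (Suc k) ** U (Suc k) - E1 (Suc k)) \<longlonglongrightarrow> 0"
    "(\<lambda>k. Y - (W (Suc k) ** Q (Suc k)) ** U (Suc k) - E2 (Suc k)) \<longlonglongrightarrow> 0"
    using tendsto_scaleR[OF tendsto_const[of "- \<mu> * \<eta>Q"] steps_tendsto_zero(1)]
      tendsto_scaleR[OF tendsto_const[of "- \<mu> * \<eta>W"] steps_tendsto_zero(2)]
      tendsto_scaleR[OF tendsto_const[of "1 / \<mu>"] steps_tendsto_zero(3)]
      tendsto_scaleR[OF tendsto_const[of "1 / \<mu>"] steps_tendsto_zero(4)]
    by simp_all
qed

context
  fixes s :: "nat \<Rightarrow> nat" and lO lU lQ lW le1 le2 lZ1 lZ2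
  assumes lim: "(\<lambda>j. iterate (s j)) \<longlonglongrightarrow> (lO, lU, lQ, lW, le1, le2, lZ1, lZ2)" and s: "strict_mono s"
begin

lemma subseq_limits:
  "(\<lambda>j. Om (s j)) \<longlonglongrightarrow> lO" "(\<lambda>j. U (s j)) \<longlonglongrightarrow> lU" "(\<lambda>j. Q (s j)) \<longlonglongrightarrow> lQ" "(\<lambda>j. W (s j)) \<longlonglongrightarrow> lW"
  "(\<lambda>j. E1 (s j)) \<longlonglongrightarrow> le1" "(\<lambda>j. E2 (s j)) \<longlonglongrightarrow> le2" "(\<lambda>j. Z1 (s j)) \<longlonglongrightarrow> lZ1" "(\<lambda>j. Z2 (s j)) \<longlonglongrightarrow> lZ2"
  "(\<lambda>j. Om (Suc (s j))) \<longlonglongrightarrow> lO" "(\<lambda>j. U (Suc (s j))) \<longlonglongrightarrow> lU" "(\<lambda>j. Q (Suc (s j))) \<longlonglongrightarrow> lQ"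
  "(\<lambda>j. W (Suc (s j))) \<longlonglongrightarrow> lW" "(\<lambda>j. E1 (Suc (s j))) \<longlonglongrightarrow> le1" "(\<lambda>j. E2 (Suc (s j))) \<longlonglongrightarrow> le2"
  "(\<lambda>j. Z1 (Suc (s j))) \<longlonglongrightarrow> lZ1" "(\<lambda>j. Z2 (Suc (s j))) \<longlonglongrightarrow> lZ2"
  using lim LIMSEQ_Suc_subseq[of "\<lambda>k. iterate k", OF lim iterate_step_tendsto_zero s]
  by (simp_all add: tendsto_Pair_iff)

lemma limit_point_feasible: "H = lQ ** lU + le1" "Y = (lW ** lQ) ** lU + le2"
proof -
  have "(\<lambda>j. H - Q (Suc (s j)) ** U (Suc (s j)) - E1 (Suc (s j))) \<longlonglongrightarrow> H - lQ ** lU - le1"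
    by (intro tendsto_intros subseq_limits)
  moreover have "(\<lambda>j. H - Q (Suc (s j)) ** U (Suc (s j)) - E1 (Suc (s j))) \<longlonglongrightarrow> 0"
    using LIMSEQ_subseq_LIMSEQ[OF optimality_residuals_tendsto_zero(3) s] by (simp add: o_def)
  ultimately have "H - lQ ** lU - le1 = 0" by (rule LIMSEQ_unique)
  then show "H = lQ ** lU + le1" by (simp add: algebra_simps)
  have "(\<lambda>j. Y - (W (Suc (s j)) ** Q (Suc (s j))) ** U (Suc (s j)) - E2 (Suc (s j)))
      \<longlonglongrightarrow> Y - (lW ** lQ) ** lU - le2"
    by (intro tendsto_intros subseq_limits)
  moreover have "(\<lambda>j. Y - (W (Suc (s j)) ** Q (Suc (s j))) ** U (Suc (s j)) - E2 (Suc (s j))) \<longlonglongrightarrow> 0"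
    using LIMSEQ_subseq_LIMSEQ[OF optimality_residuals_tendsto_zero(4) s] by (simp add: o_def)
  ultimately have "Y - (lW ** lQ) ** lU - le2 = 0" by (rule LIMSEQ_unique)
  then show "Y = (lW ** lQ) ** lU + le2" by (simp add: algebra_simps)
qed

lemma limit_point_minimizer_conditions:
  "Ls_grad_Om X lam2 lO lU = 0"
  "\<rho>1 *\<^sub>R le1 - lZ1 - \<mu> *\<^sub>R (H - lQ ** lU - le1) = 0"
  "\<rho>2 *\<^sub>R le2 - lZ2 - \<mu> *\<^sub>R (Y - (lW ** lQ) ** lU - le2) = 0"
proof -
  have "(\<lambda>j. Ls_grad_Om X lam2 (Om (Suc (s j))) (U (Suc (s j)))) \<longlonglongrightarrow> Ls_grad_Om X lam2 lO lU"
    unfolding Ls_grad_Om_def by (intro tendsto_intros subseq_limits)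
  moreover have "(\<lambda>j. Ls_grad_Om X lam2 (Om (Suc (s j))) (U (Suc (s j)))) \<longlonglongrightarrow> 0"
    by (simp add: Om_optimal)
  ultimately show "Ls_grad_Om X lam2 lO lU = 0" by (rule LIMSEQ_unique)
  have "(\<lambda>j. \<rho>1 *\<^sub>R E1 (Suc (s j)) - Z1 (s j) - \<mu> *\<^sub>R (H - Q (Suc (s j)) ** U (Suc (s j)) - E1 (Suc (s j))))
      \<longlonglongrightarrow> \<rho>1 *\<^sub>R le1 - lZ1 - \<mu> *\<^sub>R (H - lQ ** lU - le1)"
    by (intro tendsto_intros subseq_limits)
  moreover have "(\<lambda>j. \<rho>1 *\<^sub>R E1 (Suc (s j)) - Z1 (s j) - \<mu> *\<^sub>R (H - Q (Suc (s j)) ** U (Suc (s j)) - E1 (Suc (s j))))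
      \<longlonglongrightarrow> 0"
    by (simp add: E1_optimal)
  ultimately show "\<rho>1 *\<^sub>R le1 - lZ1 - \<mu> *\<^sub>R (H - lQ ** lU - le1) = 0" by (rule LIMSEQ_unique)
  have "(\<lambda>j. \<rho>2 *\<^sub>R E2 (Suc (s j)) - Z2 (s j)
        - \<mu> *\<^sub>R (Y - (W (Suc (s j)) ** Q (Suc (s j))) ** U (Suc (s j)) - E2 (Suc (s j))))
      \<longlonglongrightarrow> \<rho>2 *\<^sub>R le2 - lZ2 - \<mu> *\<^sub>R (Y - (lW ** lQ) ** lU - le2)"
    by (intro tendsto_intros subseq_limits)
  moreover have "(\<lambda>j. \<rho>2 *\<^sub>R E2 (Suc (s j)) - Z2 (s j)
        - \<mu> *\<^sub>R (Y - (W (Suc (s j)) ** Q (Suc (s j))) ** U (Suc (s j)) - E2 (Suc (s j)))) \<longlonglongrightarrow> 0"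
    by (simp add: E2_optimal)
  ultimately show "\<rho>2 *\<^sub>R le2 - lZ2 - \<mu> *\<^sub>R (Y - (lW ** lQ) ** lU - le2) = 0" by (rule LIMSEQ_unique)
qed

lemma limit_point_gradient_conditions:
  "Ls_grad_Q H Y \<delta>1 \<mu> lU lQ lW le1 le2 lZ1 lZ2 = 0"
  "Ls_grad_W Y \<delta>2 \<mu> lU lQ lW le2 lZ2 = 0"
proof -
  have "(\<lambda>j. step_grad_Q (s j)) \<longlonglongrightarrow> Ls_grad_Q H Y \<delta>1 \<mu> lU lQ lW le1 le2 lZ1 lZ2"
    unfolding step_grad_Q_def Ls_grad_Q_def by (intro tendsto_intros subseq_limits)
  moreover have "(\<lambda>j. step_grad_Q (s j)) \<longlonglongrightarrow> 0"
    using LIMSEQ_subseq_LIMSEQ[OF optimality_residuals_tendsto_zero(1) s] by (simp add: o_def)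
  ultimately show "Ls_grad_Q H Y \<delta>1 \<mu> lU lQ lW le1 le2 lZ1 lZ2 = 0" by (rule LIMSEQ_unique)
  have "(\<lambda>j. step_grad_W (s j)) \<longlonglongrightarrow> Ls_grad_W Y \<delta>2 \<mu> lU lQ lW le2 lZ2"
    unfolding step_grad_W_def Ls_grad_W_def by (intro tendsto_intros subseq_limits)
  moreover have "(\<lambda>j. step_grad_W (s j)) \<longlonglongrightarrow> 0"
    using LIMSEQ_subseq_LIMSEQ[OF optimality_residuals_tendsto_zero(2) s] by (simp add: o_def)
  ultimately show "Ls_grad_W Y \<delta>2 \<mu> lU lQ lW le2 lZ2 = 0" by (rule LIMSEQ_unique)
qed

lemma limit_point_U_prox:
  "lam1 * l1norm lU \<le> lam1 * l1norm V + Ls_grad_U X H Y \<mu> lO lU lQ lW le1 le2 lZ1 lZ2 \<bullet> (V - lU)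
     + (\<mu> * \<eta>U)/2 * (norm (V - lU))^2"
proof -
  let ?g = "Ls_grad_U X H Y \<mu> lO lU lQ lW le1 le2 lZ1 lZ2"
  have g: "(\<lambda>j. step_grad_U (s j)) \<longlonglongrightarrow> ?g"
    unfolding step_grad_U_def Ls_grad_U_def by (intro tendsto_intros subseq_limits)
  have step: "lam1 * l1norm (U (Suc (s j))) + step_grad_U (s j) \<bullet> (U (Suc (s j)) - U (s j))
      + (\<mu> * \<eta>U)/2 * (norm (U (Suc (s j)) - U (s j)))^2
    \<le> lam1 * l1norm V + step_grad_U (s j) \<bullet> (V - U (s j)) + (\<mu> * \<eta>U)/2 * (norm (V - U (s j)))^2" for j
    using soft_mat_linearized_prox[OF step_sizes_pos(1), of lam1 "U (s j)" "step_grad_U (s j)" V] pos(1)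
    unfolding U_step[symmetric] by simp
  have "lam1 * l1norm lU + ?g \<bullet> (lU - lU) + (\<mu> * \<eta>U)/2 * (norm (lU - lU))^2
      \<le> lam1 * l1norm V + ?g \<bullet> (V - lU) + (\<mu> * \<eta>U)/2 * (norm (V - lU))^2"
  proof (rule tendsto_le[OF sequentially_bot _ _ always_eventually[OF allI[OF step]]])
    show "(\<lambda>j. lam1 * l1norm V + step_grad_U (s j) \<bullet> (V - U (s j)) + (\<mu> * \<eta>U)/2 * (norm (V - U (s j)))^2)
      \<longlonglongrightarrow> lam1 * l1norm V + ?g \<bullet> (V - lU) + (\<mu> * \<eta>U)/2 * (norm (V - lU))^2"
      by (intro tendsto_intros g subseq_limits)
    show "(\<lambda>j. lam1 * l1norm (U (Suc (s j))) + step_grad_U (s j) \<bullet> (U (Suc (s j)) - U (s j))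
        + (\<mu> * \<eta>U)/2 * (norm (U (Suc (s j)) - U (s j)))^2)
      \<longlonglongrightarrow> lam1 * l1norm lU + ?g \<bullet> (lU - lU) + (\<mu> * \<eta>U)/2 * (norm (lU - lU))^2"
      by (intro tendsto_intros g subseq_limits)
  qed
  then show ?thesis by simp
qed

end

lemma limit_point_in_statset:
  assumes r: "strict_mono r" and lim: "(\<lambda>j. iterate (Suc (r j))) \<longlonglongrightarrow> l"
  shows "l \<in> statset X H Y lam1 \<rho>1 \<rho>2 \<delta>1 \<delta>2 lam2 \<mu> radius"
proof -
  obtain lO lU lQ lW le1 le2 lZ1 lZ2 where l: "l = (lO, lU, lQ, lW, le1, le2, lZ1, lZ2)"
    by (metis prod.collapse)
  have s: "strict_mono (\<lambda>j. Suc (r j))" using r by (simp add: strict_mono_def)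
  have lim': "(\<lambda>j. iterate (Suc (r j))) \<longlonglongrightarrow> (lO, lU, lQ, lW, le1, le2, lZ1, lZ2)" using lim l by simp
  define g where "g = Ls_grad_U X H Y \<mu> lO lU lQ lW le1 le2 lZ1 lZ2"
  have "lam1 * l1norm lU - g \<bullet> (y - lU) \<le> lam1 * l1norm y" for y
    using subgradient_of_proximal_min[where \<phi> = "\<lambda>V. lam1 * l1norm V",
        OF convex_on_cmul[OF _ convex_on_l1norm] _ limit_point_U_prox[OF lim' s]] pos(1) step_sizes_pos(1)
    unfolding g_def by simp
  then have sub: "l1norm lU + (- (1 / lam1) *\<^sub>R g) \<bullet> (y - lU) \<le> l1norm y" for y
    using pos(1) by (simp add: field_simps)
  have "norm l \<le> sqrt iterate_bound2"
    by (rule tendsto_upperbound[OF tendsto_norm[OF lim] always_eventually sequentially_bot])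
       (simp add: coupled_iterate_bound[OF lag_Suc_le_max Z_coupled])
  moreover have "0 \<le> (1 + \<rho>1) * norm H" "0 \<le> (1 + \<rho>2) * norm Y"
    using pos by simp_all
  ultimately have norm_l: "norm l < radius"
    unfolding radius_def by linarith
  have "grad (LsT X H Y \<rho>1 \<rho>2 \<delta>1 \<delta>2 lam2 \<mu>) l = (0, g, 0, 0, 0, 0, 0, 0)"
    using limit_point_minimizer_conditions[OF lim' s] limit_point_gradient_conditions[OF lim' s]
      limit_point_feasible[OF lim' s]
    unfolding grad_eqI[OF has_derivative_LsT] l LsT_grad_def g_def by simp
  then have "- grad (LsT X H Y \<rho>1 \<rho>2 \<delta>1 \<delta>2 lam2 \<mu>) l
      = lam1 *\<^sub>R (0, - (1 / lam1) *\<^sub>R g, 0, 0, 0, 0, 0, 0)"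
    using pos(1) by (simp add: zero_prod_def)
  moreover have "(0, - (1 / lam1) *\<^sub>R g, 0, 0, 0, 0, 0, 0) \<in> subdiff (\<lambda>th'. l1norm (fst (snd th'))) l"
    unfolding subdiff_def l using sub by (simp add: inner_prod_def)
  ultimately have "- grad (LsT X H Y \<rho>1 \<rho>2 \<delta>1 \<delta>2 lam2 \<mu>) l
      \<in> (\<lambda>g. lam1 *\<^sub>R g) ` subdiff (\<lambda>th'. l1norm (fst (snd th'))) l"
    by (rule image_eqI)
  then show ?thesis
    unfolding statset_def using norm_l limit_point_feasible[OF lim' s] by (simp add: l)
qed

lemma iterates_approach_statset:
  "(\<lambda>k. infdist (iterate k) (statset X H Y lam1 \<rho>1 \<rho>2 \<delta>1 \<delta>2 lam2 \<mu> radius)) \<longlonglongrightarrow> 0"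
proof (rule LIMSEQ_imp_Suc)
  show "(\<lambda>k. infdist (iterate (Suc k)) (statset X H Y lam1 \<rho>1 \<rho>2 \<delta>1 \<delta>2 lam2 \<mu> radius)) \<longlonglongrightarrow> 0"
    using coupled_iterate_bound[OF lag_Suc_le_max Z_coupled] limit_point_in_statset
    by (intro infdist_tendsto_zero_if_limit_points_in[of _ "sqrt iterate_bound2"]) (auto simp: o_def)
qed

end

lemma statset_witness:
  fixes X :: "real^'n^'m" and H :: "real^'n^'s" and Y :: "real^'n^'c"
  assumes "(1 + \<rho>1) * norm H + (1 + \<rho>2) * norm Y < R" "0 \<le> \<rho>1" "0 \<le> \<rho>2"
  shows "(0, 0, 0, 0, H, Y, \<rho>1 *\<^sub>R H, \<rho>2 *\<^sub>R Y) \<in> statset X H Y lam1 \<rho>1 \<rho>2 \<delta>1 \<delta>2 lam2 \<mu> R"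
proof -
  let ?th = "(0 :: real^'m^'r, 0 :: real^'n^'r, 0 :: real^'r^'s, 0 :: real^'s^'c, H, Y, \<rho>1 *\<^sub>R H, \<rho>2 *\<^sub>R Y)"
  have "norm ?th = norm (H, Y, \<rho>1 *\<^sub>R H, \<rho>2 *\<^sub>R Y)"
    by (simp add: norm_Pair)
  also have "\<dots> \<le> norm H + (norm Y + (norm (\<rho>1 *\<^sub>R H) + norm (\<rho>2 *\<^sub>R Y)))"
    by (meson add_left_mono norm_Pair_le order_trans)
  finally have "norm ?th < R"
    using assms by (simp add: algebra_simps)
  moreover have "grad (LsT X H Y \<rho>1 \<rho>2 \<delta>1 \<delta>2 lam2 \<mu>) ?th = 0"
    unfolding grad_eqI[OF has_derivative_LsT] LsT_grad_def Ls_grad_Om_def Ls_grad_U_def Ls_grad_Q_def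
      Ls_grad_W_def
    by (simp add: zero_prod_def)
  moreover have "0 \<in> subdiff (\<lambda>th'. l1norm (fst (snd th'))) ?th"
    unfolding subdiff_def by (simp add: l1norm_def sum_nonneg)
  ultimately show ?thesis
    unfolding statset_def by (force intro!: image_eqI[of 0])
qed

theorem theorem1:
  fixes X :: "real^'n^'m" and H :: "real^'n^'s" and Y :: "real^'n^'c"
    and lam1 lam2 \<rho>1 \<rho>2 \<delta>1 \<delta>2 \<mu> :: real
    and Om0 :: "real^'m^'r" and U0 :: "real^'n^'r" and Q0 :: "real^'r^'s" and W0 :: "real^'s^'c"
    and E10 :: "real^'n^'s" and E20 :: "real^'n^'c" and Z10 :: "real^'n^'s" and Z20 :: "real^'n^'c"
  assumes pos: "lam1 > 0" "lam2 > 0" "\<rho>1 > 0" "\<rho>2 > 0" "\<delta>1 > 0" "\<delta>2 > 0" "\<mu> > 0"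
    and mu_ge: "\<mu> \<ge> sqrt 2 * max \<rho>1 \<rho>2"
  shows "\<exists>\<eta>U0 \<eta>Q0 \<eta>W0 R. \<eta>U0 > 0 \<and> \<eta>Q0 > 0 \<and> \<eta>W0 > 0 \<and> R > 0 \<and>
    (\<forall>\<eta>U \<eta>Q \<eta>W.
     \<forall>(Om :: nat \<Rightarrow> real^'m^'r) (U :: nat \<Rightarrow> real^'n^'r) (Q :: nat \<Rightarrow> real^'r^'s)
      (W :: nat \<Rightarrow> real^'s^'c) (E1 :: nat \<Rightarrow> real^'n^'s) (E2 :: nat \<Rightarrow> real^'n^'c)
      (Z1 :: nat \<Rightarrow> real^'n^'s) (Z2 :: nat \<Rightarrow> real^'n^'c).
       \<eta>U > \<eta>U0 \<and> \<eta>Q > \<eta>Q0 \<and> \<eta>W > \<eta>W0 \<and>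
       Om 0 = Om0 \<and> U 0 = U0 \<and> Q 0 = Q0 \<and> W 0 = W0 \<and>
       E1 0 = E10 \<and> E2 0 = E20 \<and> Z1 0 = Z10 \<and> Z2 0 = Z20 \<and>
       (\<forall>k.
          U (Suc k) = soft_mat (lam1 / (\<mu> * \<eta>U))
            (U k - (1 / (\<mu> * \<eta>U)) *\<^sub>R
               grad (\<lambda>V. Ls X H Y \<rho>1 \<rho>2 \<delta>1 \<delta>2 lam2 \<mu>
                        (Om k) V (Q k) (W k) (E1 k) (E2 k) (Z1 k) (Z2 k)) (U k))
        \<and> Q (Suc k) = Q k - (1 / (\<mu> * \<eta>Q)) *\<^sub>R
               grad (\<lambda>V. Lag X H Y lam1 \<rho>1 \<rho>2 \<delta>1 \<delta>2 lam2 \<mu>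
                        (Om k) (U (Suc k)) V (W k) (E1 k) (E2 k) (Z1 k) (Z2 k)) (Q k)
        \<and> W (Suc k) = W k - (1 / (\<mu> * \<eta>W)) *\<^sub>R
               grad (\<lambda>V. Lag X H Y lam1 \<rho>1 \<rho>2 \<delta>1 \<delta>2 lam2 \<mu>
                        (Om k) (U (Suc k)) (Q (Suc k)) V (E1 k) (E2 k) (Z1 k) (Z2 k)) (W k)
        \<and> (\<forall>V. Lag X H Y lam1 \<rho>1 \<rho>2 \<delta>1 \<delta>2 lam2 \<mu>
                  (Om (Suc k)) (U (Suc k)) (Q (Suc k)) (W (Suc k)) (E1 k) (E2 k) (Z1 k) (Z2 k)
                \<le> Lag X H Y lam1 \<rho>1 \<rho>2 \<delta>1 \<delta>2 lam2 \<mu>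
                  V (U (Suc k)) (Q (Suc k)) (W (Suc k)) (E1 k) (E2 k) (Z1 k) (Z2 k))
        \<and> (\<forall>V. Lag X H Y lam1 \<rho>1 \<rho>2 \<delta>1 \<delta>2 lam2 \<mu>
                  (Om (Suc k)) (U (Suc k)) (Q (Suc k)) (W (Suc k)) (E1 (Suc k)) (E2 k) (Z1 k) (Z2 k)
                \<le> Lag X H Y lam1 \<rho>1 \<rho>2 \<delta>1 \<delta>2 lam2 \<mu>
                  (Om (Suc k)) (U (Suc k)) (Q (Suc k)) (W (Suc k)) V (E2 k) (Z1 k) (Z2 k))
        \<and> (\<forall>V. Lag X H Y lam1 \<rho>1 \<rho>2 \<delta>1 \<delta>2 lam2 \<mu>
                  (Om (Suc k)) (U (Suc k)) (Q (Suc k)) (W (Suc k)) (E1 (Suc k)) (E2 (Suc k)) (Z1 k) (Z2 k)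
                \<le> Lag X H Y lam1 \<rho>1 \<rho>2 \<delta>1 \<delta>2 lam2 \<mu>
                  (Om (Suc k)) (U (Suc k)) (Q (Suc k)) (W (Suc k)) (E1 (Suc k)) V (Z1 k) (Z2 k))
        \<and> Z1 (Suc k) = Z1 k + \<mu> *\<^sub>R (H - Q (Suc k) ** U (Suc k) - E1 (Suc k))
        \<and> Z2 (Suc k) = Z2 k + \<mu> *\<^sub>R (Y - (W (Suc k) ** Q (Suc k)) ** U (Suc k) - E2 (Suc k)))
       \<longrightarrow> statset X H Y lam1 \<rho>1 \<rho>2 \<delta>1 \<delta>2 lam2 \<mu> R \<noteq> {}
         \<and> (\<lambda>k. infdist (Om k, U k, Q k, W k, E1 k, E2 k, Z1 k, Z2 k)
                   (statset X H Y lam1 \<rho>1 \<rho>2 \<delta>1 \<delta>2 lam2 \<mu> R)) \<longlonglongrightarrow> 0)"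
proof -
  interpret ladm X H Y lam1 lam2 \<rho>1 \<rho>2 \<delta>1 \<delta>2 \<mu> Om0 U0 Q0 W0 E10 E20 Z10 Z20
    using pos mu_ge by unfold_locales
  show ?thesis
    apply (rule exI[of _ eta_U0], rule exI[of _ eta_Q0], rule exI[of _ eta_W0], rule exI[of _ radius])
    apply (intro conjI eta_pos radius_pos allI impI)
    subgoal
      \<comment> \<open>This conjunct concerns statset at an arbitrary rank type, unrelated to the type of
        the iterates, so it needs an explicit witness.\<close>
      using statset_witness[OF radius_gt less_imp_le[OF pos(3)] less_imp_le[OF pos(4)]] by blast
    subgoal premises iteration for \<eta>U \<eta>Q \<eta>W Om U Q W E1 E2 Z1 Z2
    proof -
      interpret ladm_iteration X H Y lam1 lam2 \<rho>1 \<rho>2 \<delta>1 \<delta>2 \<mu> Om0 U0 Q0 W0 E10 E20 Z10 Z20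
          \<eta>U \<eta>Q \<eta>W Om U Q W E1 E2 Z1 Z2
        by (unfold_locales; use iteration in blast)
      show ?thesis by (rule iterates_approach_statset)
    qed
    done
qed

end
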